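(* Let $p$ be any of the following patterns, or any pattern in the same symmetry class as one of them: $(123,\{0\},\{0,1\})$, $(123,\{0\},\{0,3\})$, $(123,\{1\},\{0,1\})$, $(123,\{0,1\},\{0,2\})$, $(123,\{0,1\},\{1,2\})$, $(123,\{0,1\},\{0,3\})$, $(123,\{0,1\},\{1,3\})$, $(123,\{0,1\},\{2,3\})$, $(123,\{0,2\},\{1,2\})$, $(123,\{0,2\},\{0,3\})$, $(123,\{0,2\},\{1,3\})$, $(123,\{1,2\},\{0,3\})$, $(132,\{0\},\{0,1\})$, $(132,\{0\},\{0,3\})$, $(132,\{1\},\{0,3\})$, $(132,\{0,1\},\{0,1\})$, $(132,\{0,1\},\{0,2\})$, $(132,\{0,1\},\{1,2\})$, $(132,\{0,1\},\{3\})$, $(132,\{0,1\},\{1,3\})$, $(132,\{0,1\},\{2,3\})$, $(132,\{2\},\{2,3\})$, $(132,\{0,2\},\{1,2\})$, $(132,\{0,2\},\{0,3\})$, $(132,\{0,2\},\{1,3\})$, $(132,\{0,2\},\{2,3\})$, $(132,\{1,2\},\{0,3\})$, $(132,\{1,2\},\{1,3\})$, $(132,\{1,2\},\{2,3\})$, $(132,\{3\},\{2,3\})$, $(132,\{0,3\},\{0,3\})$, $(132,\{0,3\},\{1,3\})$, $(132,\{0,3\},\{2,3\})$, $(132,\{1,3\},\{1,3\})$, $(132,\{1,3\},\{2,3\})$. Then for all $n\ge2$, $a_n(p)=n!-(n-2)!\,(n-2)$.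
   Context: For $n\ge1$, $\mathcal S_n$ is the set of permutations $\pi=\pi_1\cdots\pi_n$ of $[n]$. A bi-vincular pattern of length $k$ is a triple $p=(\sigma,X,Y)$ with $\sigma\in\mathcal S_k$ and $X,Y\subseteq\{0,1,\dots,k\}$. A permutation $\pi\in\mathcal S_n$ contains $p$ if there are indices $1\le i_1<\dots<i_k\le n$ such that $(\pi_{i_1},\dots,\pi_{i_k})$ is order-isomorphic to $\sigma$ and, letting $j_1<\dots<j_k$ be the values $\pi_{i_1},\dots,\pi_{i_k}$ sorted increasingly and setting $i_0=j_0=0$, $i_{k+1}=j_{k+1}=n+1$, one has $i_{x+1}=i_x+1$ for all $x\in X$ and $j_{y+1}=j_y+1$ for all $y\in Y$. Otherwise $\pi$ avoids $p$; $a_n(p)$ is the number of $\pi\in\mathcal S_n$ avoiding $p$. Symmetries: $p^{i}=(\sigma^{-1},Y,X)$, $p^{r}=(\sigma^{r},\{k-x:x\in X\},Y)$, $p^{c}=(\sigma^{c},X,\{k-y:y\in Y\})$ with $\sigma^r_j=\sigma_{k+1-j}$, $\sigma^c_j=k+1-\sigma_j$; the symmetry class of $p$ consists of all patterns obtained from $p$ by finitely many applications of these maps. *)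

theory Defs
  imports "HOL-Combinatorics.Multiset_Permutations"
begin

text \<open>Permutations of [n] are lists w = pi_1 ... pi_n (1-based: pi_i = nth1 w i).
  A bi-vincular pattern is a triple (sigma, X, Y) with sigma a list (a permutation of [k], k = length sigma).\<close>

type_synonym bvpattern = "nat list \<times> nat set \<times> nat set"

definition nth1 :: "nat list \<Rightarrow> nat \<Rightarrow> nat" where
  "nth1 xs i = xs ! (i - 1)"

definition Sn :: "nat \<Rightarrow> nat list set" where
  "Sn n = permutations_of_set {1..n}"

definition contains :: "nat list \<Rightarrow> bvpattern \<Rightarrow> bool" where
  "contains w p = (case p of (\<sigma>, X, Y) \<Rightarrow>
     (let k = length \<sigma>; n = length w in
      \<exists>idx :: nat \<Rightarrow> nat.
        (\<forall>a\<in>{1..<k}. idx a < idx (a + 1)) \<and>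
        (\<forall>a\<in>{1..k}. 1 \<le> idx a \<and> idx a \<le> n) \<and>
        (\<forall>a\<in>{1..k}. \<forall>b\<in>{1..k}.
            (nth1 w (idx a) < nth1 w (idx b)) \<longleftrightarrow> (nth1 \<sigma> a < nth1 \<sigma> b)) \<and>
        (let I = (\<lambda>x. if x = 0 then 0 else if x = k + 1 then n + 1 else idx x);
             vals = sorted_list_of_set ((\<lambda>a. nth1 w (idx a)) ` {1..k});
             J = (\<lambda>y. if y = 0 then 0 else if y = k + 1 then n + 1 else nth1 vals y)
         in (\<forall>x\<in>X. x \<le> k \<longrightarrow> I (x + 1) = I x + 1) \<and>
            (\<forall>y\<in>Y. y \<le> k \<longrightarrow> J (y + 1) = J y + 1))))"

definition avoids :: "nat list \<Rightarrow> bvpattern \<Rightarrow> bool" where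
  "avoids w p = (\<not> contains w p)"

definition a_n :: "nat \<Rightarrow> bvpattern \<Rightarrow> nat" where
  "a_n n p = card {w \<in> Sn n. avoids w p}"

definition inv_perm_list :: "nat list \<Rightarrow> nat list" where
  "inv_perm_list \<sigma> = map (\<lambda>j. THE a. a \<in> {1..length \<sigma>} \<and> nth1 \<sigma> a = j) [1..<length \<sigma> + 1]"

definition sym_i :: "bvpattern \<Rightarrow> bvpattern" where
  "sym_i p = (case p of (\<sigma>, X, Y) \<Rightarrow> (inv_perm_list \<sigma>, Y, X))"

definition sym_r :: "bvpattern \<Rightarrow> bvpattern" where
  "sym_r p = (case p of (\<sigma>, X, Y) \<Rightarrow> (rev \<sigma>, (\<lambda>x. length \<sigma> - x) ` X, Y))"

definition sym_c :: "bvpattern \<Rightarrow> bvpattern" where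
  "sym_c p = (case p of (\<sigma>, X, Y) \<Rightarrow>
     (map (\<lambda>v. length \<sigma> + 1 - v) \<sigma>, X, (\<lambda>y. length \<sigma> - y) ` Y))"

inductive_set sym_class :: "bvpattern \<Rightarrow> bvpattern set" for p :: bvpattern where
  base: "p \<in> sym_class p"
| inv: "q \<in> sym_class p \<Longrightarrow> sym_i q \<in> sym_class p"
| rev: "q \<in> sym_class p \<Longrightarrow> sym_r q \<in> sym_class p"
| comp: "q \<in> sym_class p \<Longrightarrow> sym_c q \<in> sym_class p"

definition thm16_patterns :: "bvpattern list" where
  "thm16_patterns = [
    ([1,2,3], {0}, {0,1}), ([1,2,3], {0}, {0,3}), ([1,2,3], {1}, {0,1}),
    ([1,2,3], {0,1}, {0,2}), ([1,2,3], {0,1}, {1,2}), ([1,2,3], {0,1}, {0,3}),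
    ([1,2,3], {0,1}, {1,3}), ([1,2,3], {0,1}, {2,3}), ([1,2,3], {0,2}, {1,2}),
    ([1,2,3], {0,2}, {0,3}), ([1,2,3], {0,2}, {1,3}), ([1,2,3], {1,2}, {0,3}),
    ([1,3,2], {0}, {0,1}), ([1,3,2], {0}, {0,3}), ([1,3,2], {1}, {0,3}),
    ([1,3,2], {0,1}, {0,1}), ([1,3,2], {0,1}, {0,2}), ([1,3,2], {0,1}, {1,2}),
    ([1,3,2], {0,1}, {3}), ([1,3,2], {0,1}, {1,3}), ([1,3,2], {0,1}, {2,3}),
    ([1,3,2], {2}, {2,3}), ([1,3,2], {0,2}, {1,2}), ([1,3,2], {0,2}, {0,3}),
    ([1,3,2], {0,2}, {1,3}), ([1,3,2], {0,2}, {2,3}), ([1,3,2], {1,2}, {0,3}),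
    ([1,3,2], {1,2}, {1,3}), ([1,3,2], {1,2}, {2,3}), ([1,3,2], {3}, {2,3}),
    ([1,3,2], {0,3}, {0,3}), ([1,3,2], {0,3}, {1,3}), ([1,3,2], {0,3}, {2,3}),
    ([1,3,2], {1,3}, {1,3}), ([1,3,2], {1,3}, {2,3})]"

end

theory Submission
  imports Defs
begin

text \<open>
  A permutation of \<open>[n]\<close> is identified with a bijection \<open>f\<close> of \<open>{1..n}\<close>. The symmetries \<open>i\<close>, \<open>r\<close>
  and \<open>c\<close> of patterns are realised by the involutions \<open>f \<mapsto> inv f\<close>, \<open>f \<mapsto> f \<circ> \<rho>\<close> and
  \<open>f \<mapsto> \<rho> \<circ> f\<close> of the permutations, where \<open>\<rho> i = n + 1 - i\<close>; hence they preserve the number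
  of avoiders, and only the 35 listed patterns have to be treated.

  For each of them the permutations containing the pattern are described explicitly: either as
  those with \<open>f i = v\<close> but \<open>f i' \<noteq> v'\<close>, or as a disjoint union, over \<open>n - 2\<close> or \<open>(n - 2)\<^sup>2\<close>
  parameters, of the sets of permutations with two or three prescribed values. As \<open>m\<close>
  prescribed values leave \<open>(n - m)!\<close> permutations, each case has
  \<open>(n - 1)! - (n - 2)! = (n - 2)! (n - 2)\<close> elements.
\<close>

section \<open>Permutations with prescribed values\<close>

definition partial_perm :: "'a set \<Rightarrow> ('a \<times> 'a) list \<Rightarrow> bool" where
  "partial_perm S cs \<longleftrightarrow> distinct (map fst cs) \<and> distinct (map snd cs) \<and> set cs \<subseteq> S \<times> S"

definition takes_values :: "('a \<Rightarrow> 'a) \<Rightarrow> ('a \<times> 'a) list \<Rightarrow> bool" where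
  "takes_values f cs \<longleftrightarrow> (\<forall>(i, v)\<in>set cs. f i = v)"

lemma takes_values_simps [simp]:
  "takes_values f []"
  "takes_values f ((i, v) # cs) \<longleftrightarrow> f i = v \<and> takes_values f cs"
  by (auto simp: takes_values_def)

lemma card_permutes_takes_values:
  assumes "finite S" "partial_perm S cs"
  shows "card {f. f permutes S \<and> takes_values f cs} = fact (card S - length cs)"
  using assms unfolding partial_perm_def takes_values_def
proof (induction "length cs" arbitrary: cs S)
  case 0
  then show ?case by (simp add: card_permutations)
next
  case (Suc m cs0 S)
  then obtain i v cs where cs0: "cs0 = (i, v) # cs"
    by (metis length_Suc_conv surj_pair)
  note prems = Suc.prems[unfolded cs0]
  \<comment> \<open>Composing with the transposition of \<open>i\<close> and \<open>v\<close> identifies the permutations of \<open>S\<close>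
    mapping \<open>i\<close> to \<open>v\<close> with the permutations of \<open>S - {i}\<close>.\<close>
  define t where "t = transpose i v"
  define cs' where "cs' = map (apsnd t) cs"
  have iv: "i \<in> S" "v \<in> S" and fresh: "\<And>j u. (j, u) \<in> set cs \<Longrightarrow> j \<noteq> i \<and> u \<noteq> v"
    using prems by (auto simp: image_iff)
  have t_eq: "t x = u \<longleftrightarrow> x = t u" for x u
    unfolding t_def by (metis transpose_involutory)
  have takes: "(\<forall>(j, u)\<in>set cs. (t \<circ> g) j = u) \<longleftrightarrow> (\<forall>(j, u)\<in>set cs'. g j = u)" for g
    by (simp add: cs'_def t_eq split_def)
  have IH: "card {g. g permutes S - {i} \<and> (\<forall>(j, u)\<in>set cs'. g j = u)}
      = fact (card (S - {i}) - length cs')"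
  proof (rule Suc.hyps(1))
    have "distinct (map t (map snd cs))"
      by (subst distinct_map) (use prems in \<open>simp add: t_def\<close>)
    moreover have "apsnd t x \<in> (S - {i}) \<times> (S - {i})" if "x \<in> set cs" for x
      using fresh prems that iv unfolding t_def by (cases x) (auto simp: transpose_def)
    ultimately show
      "distinct (map fst cs') \<and> distinct (map snd cs') \<and> set cs' \<subseteq> (S - {i}) \<times> (S - {i})"
      using prems unfolding cs'_def by (simp add: comp_def image_subset_iff)
  qed (use prems Suc.hyps(2) cs0 in \<open>auto simp: cs'_def\<close>)
  have perm: "t \<circ> g permutes S \<and> (t \<circ> g) i = v" if "g permutes S - {i}" for g
    using permutes_compose[OF permutes_subset[OF that] permutes_swap_id[OF iv]]
      permutes_not_in[OF that]
    unfolding t_def by auto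
  have perm': "t \<circ> f permutes S - {i}" if "f permutes S" "f i = v" for f
    using permutes_compose[OF that(1) permutes_swap_id[OF iv]] that(2)
    unfolding t_def by (auto intro: permutes_superset)
  define G where "G = {g. g permutes S - {i} \<and> (\<forall>(j, u)\<in>set cs'. g j = u)}"
  define F where "F = {f. f permutes S \<and> (\<forall>(j, u)\<in>set ((i, v) # cs). f j = u)}"
  have "bij_betw ((\<circ>) t) G F"
  proof (rule bij_betw_byWitness[where f' = "(\<circ>) t"])
    show "(\<circ>) t ` G \<subseteq> F"
    proof (rule image_subsetI)
      fix g assume "g \<in> G"
      then show "t \<circ> g \<in> F"
        using perm takes[of g] by (simp add: G_def F_def)
    qed
    show "(\<circ>) t ` F \<subseteq> G"
    proof (rule image_subsetI)
      fix f assume "f \<in> F"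
      then show "t \<circ> f \<in> G"
        using perm' takes[of "t \<circ> f"] by (simp add: G_def F_def comp_assoc[symmetric] t_def)
    qed
  qed (auto simp: t_def comp_assoc[symmetric])
  then have "card F = card G"
    by (rule bij_betw_same_card[symmetric])
  moreover have "card (S - {i}) - length cs' = card S - length cs0"
    using iv prems(1) by (simp add: cs'_def cs0)
  ultimately show ?case
    using IH[folded G_def] by (simp add: F_def cs0)
qed

lemma takes_values_compatible:
  assumes "f permutes S" "takes_values f cs" "takes_values f cs'"
  shows "\<forall>(i, v)\<in>set cs. \<forall>(i', v')\<in>set cs'. i = i' \<longleftrightarrow> v = v'"
proof (intro ballI, clarify)
  fix i v i' v' assume "(i, v) \<in> set cs" "(i', v') \<in> set cs'"
  then have "f i = v" "f i' = v'"
    using assms(2,3) unfolding takes_values_def by auto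
  then show "i = i' \<longleftrightarrow> v = v'"
    using inj_eq[OF permutes_inj[OF assms(1)], of i i'] by simp
qed

lemma card_permutes_takes_values_Union:
  assumes "finite S" "finite K"
    and table: "\<And>k. k \<in> K \<Longrightarrow> partial_perm S (cs k) \<and> length (cs k) = m"
    and disjoint: "\<And>k k'. k \<in> K \<Longrightarrow> k' \<in> K \<Longrightarrow>
      \<forall>(i, v)\<in>set (cs k). \<forall>(i', v')\<in>set (cs k'). i = i' \<longleftrightarrow> v = v' \<Longrightarrow> k = k'"
  shows "card {f. f permutes S \<and> (\<exists>k\<in>K. takes_values f (cs k))} = card K * fact (card S - m)"
proof -
  define F where "F k = {f. f permutes S \<and> takes_values f (cs k)}" for k
  have "{f. f permutes S \<and> (\<exists>k\<in>K. takes_values f (cs k))} = (\<Union>k\<in>K. F k)"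
    unfolding F_def by auto
  moreover have "card (\<Union>k\<in>K. F k) = (\<Sum>k\<in>K. card (F k))"
  proof (rule card_UN_disjoint)
    show "\<forall>k\<in>K. finite (F k)"
      unfolding F_def using finite_permutations[OF \<open>finite S\<close>] by (auto intro: rev_finite_subset)
    show "\<forall>k\<in>K. \<forall>k'\<in>K. k \<noteq> k' \<longrightarrow> F k \<inter> F k' = {}"
      using disjoint takes_values_compatible unfolding F_def by blast
  qed (rule \<open>finite K\<close>)
  moreover have "card (F k) = fact (card S - m)" if "k \<in> K" for k
    using card_permutes_takes_values[OF \<open>finite S\<close>] table[OF that] unfolding F_def by simp
  ultimately show ?thesis by simp
qed

lemma card_permutes_value_not_value:
  assumes "finite S" "i \<in> S" "i' \<in> S" "v \<in> S" "v' \<in> S" "i \<noteq> i'" "v \<noteq> v'"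
  shows "card {f. f permutes S \<and> f i = v \<and> f i' \<noteq> v'} = fact (card S - 2) * (card S - 2)"
proof -
  define A where "A = {f. f permutes S \<and> f i = v}"
  define B where "B = {f. f permutes S \<and> f i = v \<and> f i' = v'}"
  have "card A = fact (card S - 1)"
    using card_permutes_takes_values[OF \<open>finite S\<close>, of "[(i, v)]"] assms
    by (simp add: A_def partial_perm_def)
  moreover have "card B = fact (card S - 2)"
    using card_permutes_takes_values[OF \<open>finite S\<close>, of "[(i, v), (i', v')]"] assms
    by (simp add: B_def partial_perm_def numeral_2_eq_2)
  moreover have "finite B" "B \<subseteq> A"
    using finite_permutations[OF \<open>finite S\<close>] unfolding A_def B_def by (auto intro: rev_finite_subset)
  moreover have "{f. f permutes S \<and> f i = v \<and> f i' \<noteq> v'} = A - B"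
    unfolding A_def B_def by auto
  ultimately have "card {f. f permutes S \<and> f i = v \<and> f i' \<noteq> v'} = fact (card S - 1) - fact (card S - 2)"
    by (simp add: card_Diff_subset)
  moreover have "card {i, i'} \<le> card S"
    by (rule card_mono) (use assms in auto)
  then obtain m where "card S = m + 2"
    using \<open>i \<noteq> i'\<close> by (metis card_2_iff le_add_diff_inverse2)
  then have "fact (card S - 1) - fact (card S - 2) = fact (card S - 2) * (card S - 2)"
    by (simp add: algebra_simps)
  ultimately show ?thesis by simp
qed

section \<open>Occurrences of patterns of length three\<close>

lemma nth1_mem_set: "a \<in> {1..length xs} \<Longrightarrow> nth1 xs a \<in> set xs"
  unfolding nth1_def by (rule nth_mem) auto

lemma nth1_map_upt: "i \<in> {1..n} \<Longrightarrow> nth1 (map f [1..<n + 1]) i = f i"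
  unfolding nth1_def by (subst nth_map) (auto simp del: upt_Suc)

lemma nth1_equalityI:
  assumes "length xs = length ys" "\<And>a. a \<in> {1..length xs} \<Longrightarrow> nth1 xs a = nth1 ys a"
  shows "xs = ys"
proof (rule nth_equalityI)
  fix i assume "i < length xs"
  then show "xs ! i = ys ! i"
    using assms(2)[of "i + 1"] by (simp add: nth1_def)
qed (rule assms(1))

lemma nth1_inj_on:
  assumes "distinct xs" "a \<in> {1..length xs}" "b \<in> {1..length xs}" "nth1 xs a = nth1 xs b"
  shows "a = b"
proof -
  have "xs ! (a - 1) = xs ! (b - 1)" "a - 1 < length xs" "b - 1 < length xs"
    using assms by (auto simp: nth1_def)
  then have "a - 1 = b - 1"
    using assms(1) nth_eq_iff_index_eq by blast
  then show ?thesis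
    using assms(2,3) by auto
qed

lemma
  assumes \<sigma>: "\<sigma> \<in> permutations_of_set {1..k}" and b: "b \<in> {1..k}"
  shows nth1_inv_perm_list_mem: "nth1 (inv_perm_list \<sigma>) b \<in> {1..k}"
    and nth1_nth1_inv_perm_list: "nth1 \<sigma> (nth1 (inv_perm_list \<sigma>) b) = b"
proof -
  have len: "length \<sigma> = k" and set: "set \<sigma> = {1..k}" and dist: "distinct \<sigma>"
    using \<sigma> length_finite_permutations_of_set[OF \<sigma>] by (auto simp: permutations_of_set_def)
  have "b \<in> set \<sigma>"
    using b set by simp
  then obtain j where "j < k" "\<sigma> ! j = b"
    using len by (auto simp: in_set_conv_nth)
  then obtain a where a: "a \<in> {1..k}" "nth1 \<sigma> a = b"
    by (intro that[of "j + 1"]) (auto simp: nth1_def)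
  have "(THE a. a \<in> {1..k} \<and> nth1 \<sigma> a = b) = a"
  proof (rule the_equality)
    fix x assume "x \<in> {1..k} \<and> nth1 \<sigma> x = b"
    then show "x = a"
      using nth1_inj_on[OF dist, of x a] a len by simp
  qed (use a in simp)
  moreover have "nth1 (inv_perm_list \<sigma>) b = (THE a. a \<in> {1..k} \<and> nth1 \<sigma> a = b)"
    unfolding inv_perm_list_def len using b by (rule nth1_map_upt)
  ultimately show "nth1 (inv_perm_list \<sigma>) b \<in> {1..k}" "nth1 \<sigma> (nth1 (inv_perm_list \<sigma>) b) = b"
    using a by simp_all
qed

lemma nth1_inv_perm_list_nth1:
  assumes \<sigma>: "\<sigma> \<in> permutations_of_set {1..k}" and a: "a \<in> {1..k}"
  shows "nth1 (inv_perm_list \<sigma>) (nth1 \<sigma> a) = a"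
proof -
  have len: "length \<sigma> = k" and set: "set \<sigma> = {1..k}" and dist: "distinct \<sigma>"
    using \<sigma> length_finite_permutations_of_set[OF \<sigma>] by (auto simp: permutations_of_set_def)
  have "nth1 \<sigma> a \<in> {1..k}"
    using nth1_mem_set[of a \<sigma>] a len set by simp
  then show ?thesis
    using nth1_inj_on[OF dist, of "nth1 (inv_perm_list \<sigma>) (nth1 \<sigma> a)" a]
      nth1_inv_perm_list_mem[OF \<sigma>] nth1_nth1_inv_perm_list[OF \<sigma>] a len
    by simp
qed

lemma inv_perm_list_permutation:
  assumes \<sigma>: "\<sigma> \<in> permutations_of_set {1..k}"
  shows "inv_perm_list \<sigma> \<in> permutations_of_set {1..k}"
proof -
  have len: "length \<sigma> = k"
    using length_finite_permutations_of_set[OF \<sigma>] by simp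
  define g where "g b = (THE a. a \<in> {1..k} \<and> nth1 \<sigma> a = b)" for b
  have g: "inv_perm_list \<sigma> = map g [1..<k + 1]"
    by (simp add: inv_perm_list_def len g_def)
  have nth: "nth1 (inv_perm_list \<sigma>) b = g b" if "b \<in> {1..k}" for b
    unfolding g using that by (rule nth1_map_upt)
  have "inj_on g {1..k}"
  proof (rule inj_onI)
    fix b b' assume "b \<in> {1..k}" "b' \<in> {1..k}" "g b = g b'"
    then show "b = b'"
      using nth1_nth1_inv_perm_list[OF \<sigma>, of b] nth1_nth1_inv_perm_list[OF \<sigma>, of b'] nth by simp
  qed
  moreover have "g ` {1..k} = {1..k}"
  proof
    show "g ` {1..k} \<subseteq> {1..k}"
      using nth1_inv_perm_list_mem[OF \<sigma>] nth by auto
    show "{1..k} \<subseteq> g ` {1..k}"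
    proof
      fix a assume a: "a \<in> {1..k}"
      then have "nth1 \<sigma> a \<in> {1..k}"
        using nth1_mem_set[of a \<sigma>] len \<sigma> by (simp add: permutations_of_set_def)
      then show "a \<in> g ` {1..k}"
        using nth1_inv_perm_list_nth1[OF \<sigma> a] nth by (metis image_eqI)
    qed
  qed
  moreover have "set [1..<k + 1] = {1..k}"
    by auto
  ultimately show ?thesis
    unfolding g permutations_of_set_def by (simp add: distinct_map)
qed

definition increasing3 :: "nat \<Rightarrow> (nat \<Rightarrow> nat) \<Rightarrow> bool" where
  "increasing3 n P \<longleftrightarrow> 1 \<le> P 1 \<and> P 1 < P 2 \<and> P 2 < P 3 \<and> P 3 \<le> n"

text \<open>\<open>P 0 = 0\<close> and \<open>P 4 = n + 1\<close> play the role of the sentinels \<open>i\<^sub>0\<close> and \<open>i\<^sub>k\<^sub>+\<^sub>1\<close> of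
  \<open>contains\<close>.\<close>

definition adjacent3 :: "nat \<Rightarrow> nat set \<Rightarrow> (nat \<Rightarrow> nat) \<Rightarrow> bool" where
  "adjacent3 n X P \<longleftrightarrow>
     (0 \<in> X \<longrightarrow> P 1 = 1) \<and> (1 \<in> X \<longrightarrow> P 2 = P 1 + 1) \<and>
     (2 \<in> X \<longrightarrow> P 3 = P 2 + 1) \<and> (3 \<in> X \<longrightarrow> P 3 = n)"

text \<open>\<open>Q\<close> lists the values of the occurrence in increasing order, so \<open>f (P a) = Q (\<sigma> a)\<close> says
  that the occurrence is order-isomorphic to \<open>\<sigma>\<close>.\<close>

definition occurs :: "nat \<Rightarrow> (nat \<Rightarrow> nat) \<Rightarrow> nat list \<Rightarrow> nat set \<Rightarrow> nat set \<Rightarrow> bool" where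
  "occurs n f \<sigma> X Y \<longleftrightarrow> (\<exists>P Q. increasing3 n P \<and> increasing3 n Q \<and>
     (\<forall>a\<in>{1, 2, 3}. f (P a) = Q (nth1 \<sigma> a)) \<and> adjacent3 n X P \<and> adjacent3 n Y Q)"

lemma increasing3_less_iff:
  "increasing3 n Q \<Longrightarrow> a \<in> {1, 2, 3} \<Longrightarrow> b \<in> {1, 2, 3} \<Longrightarrow> Q a < Q b \<longleftrightarrow> a < b"
  unfolding increasing3_def by auto

lemma increasing3_range: "increasing3 n Q \<Longrightarrow> a \<in> {1, 2, 3} \<Longrightarrow> Q a \<in> {1..n}"
  unfolding increasing3_def by auto

lemma sorted_list_of_set_increasing3:
  assumes "increasing3 n Q"
  shows "sorted_list_of_set (Q ` {1, 2, 3}) = [Q 1, Q 2, Q 3]"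
proof -
  have "Q ` {1, 2, 3} = set [Q 1, Q 2, Q 3]" by simp
  then show ?thesis
    using assms unfolding increasing3_def
    by (simp only: sorted_list_of_set_sort_remdups) auto
qed

lemma adjacent3_cong: "(\<And>a. a \<in> {1, 2, 3} \<Longrightarrow> P a = P' a) \<Longrightarrow> adjacent3 n X P = adjacent3 n X P'"
  unfolding adjacent3_def by simp

lemma adjacent3_sorted_list_of_set:
  assumes "increasing3 n Q"
  shows "adjacent3 n Y (nth1 (sorted_list_of_set (Q ` {1, 2, 3}))) \<longleftrightarrow> adjacent3 n Y Q"
  unfolding sorted_list_of_set_increasing3[OF assms] by (rule adjacent3_cong) (auto simp: nth1_def)

lemma vincular_condition_iff_adjacent3:
  "(\<forall>x\<in>X. x \<le> 3 \<longrightarrow>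
      (if x + 1 = 0 then 0 else if x + 1 = 3 + 1 then n + 1 else P (x + 1)) =
      (if x = 0 then 0 else if x = 3 + 1 then n + 1 else P x) + 1) \<longleftrightarrow> adjacent3 n X P"
proof -
  have "(\<forall>x\<in>X. x \<le> 3 \<longrightarrow>
      (if x + 1 = 0 then 0 else if x + 1 = 3 + 1 then n + 1 else P (x + 1)) =
      (if x = 0 then 0 else if x = 3 + 1 then n + 1 else P x) + 1) \<longleftrightarrow>
    (\<forall>x\<in>X. (x = 0 \<longrightarrow> P 1 = 1) \<and> (x = 1 \<longrightarrow> P 2 = P 1 + 1) \<and>
      (x = 2 \<longrightarrow> P 3 = P 2 + 1) \<and> (x = 3 \<longrightarrow> P 3 = n))"
  proof (rule ball_cong[OF refl])
    fix x :: nat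
    show "(x \<le> 3 \<longrightarrow>
        (if x + 1 = 0 then 0 else if x + 1 = 3 + 1 then n + 1 else P (x + 1)) =
        (if x = 0 then 0 else if x = 3 + 1 then n + 1 else P x) + 1) \<longleftrightarrow>
      (x = 0 \<longrightarrow> P 1 = 1) \<and> (x = 1 \<longrightarrow> P 2 = P 1 + 1) \<and>
      (x = 2 \<longrightarrow> P 3 = P 2 + 1) \<and> (x = 3 \<longrightarrow> P 3 = n)"
      by (cases "x \<le> 3") (auto simp: le_Suc_eq numeral_eq_Suc)
  qed
  also have "\<dots> \<longleftrightarrow> adjacent3 n X P"
    unfolding adjacent3_def by blast
  finally show ?thesis .
qed

lemma increasing3_iff:
  "increasing3 n P \<longleftrightarrow> (\<forall>a\<in>{1, 2}. P a < P (a + 1)) \<and> (\<forall>a\<in>{1, 2, 3}. 1 \<le> P a \<and> P a \<le> n)"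
  unfolding increasing3_def by (auto simp: numeral_2_eq_2 numeral_3_eq_3)

lemma contains_length3_iff:
  assumes "length \<sigma> = 3"
  shows "contains w (\<sigma>, X, Y) \<longleftrightarrow> (\<exists>P. increasing3 (length w) P \<and>
     (\<forall>a\<in>{1, 2, 3}. \<forall>b\<in>{1, 2, 3}. nth1 w (P a) < nth1 w (P b) \<longleftrightarrow> nth1 \<sigma> a < nth1 \<sigma> b) \<and>
     adjacent3 (length w) X P \<and>
     adjacent3 (length w) Y (nth1 (sorted_list_of_set ((\<lambda>a. nth1 w (P a)) ` {1, 2, 3}))))"
proof -
  have "{1..<3::nat} = {1, 2}" "{1..3::nat} = {1, 2, 3}"
    by auto
  then show ?thesis
    unfolding contains_def Let_def split assms vincular_condition_iff_adjacent3 increasing3_iff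
    by (simp only: conj_assoc)
qed

lemma image_nth1: "nth1 xs ` {1..length xs} = set xs"
proof
  show "nth1 xs ` {1..length xs} \<subseteq> set xs"
    using nth1_mem_set by blast
  show "set xs \<subseteq> nth1 xs ` {1..length xs}"
  proof
    fix x assume "x \<in> set xs"
    then obtain j where "j < length xs" "xs ! j = x"
      by (auto simp: in_set_conv_nth)
    then have "j + 1 \<in> {1..length xs}" "nth1 xs (j + 1) = x"
      by (auto simp: nth1_def)
    then show "x \<in> nth1 xs ` {1..length xs}"
      by (metis image_eqI)
  qed
qed

lemma image_nth1_permutation3:
  assumes "\<sigma> \<in> permutations_of_set {1, 2, 3}"
  shows "nth1 \<sigma> ` {1, 2, 3} = {1, 2, 3}"
proof -
  have "length \<sigma> = 3" "set \<sigma> = {1, 2, 3}"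
    using length_finite_permutations_of_set[OF assms] assms by (simp_all add: permutations_of_set_def)
  moreover have "{1..3::nat} = {1, 2, 3}"
    by auto
  ultimately show ?thesis
    using image_nth1[of \<sigma>] by simp
qed

lemma contains_map_iff_occurs:
  assumes f: "f permutes {1..n}" and \<sigma>: "\<sigma> \<in> permutations_of_set {1, 2, 3}"
  shows "contains (map f [1..<n + 1]) (\<sigma>, X, Y) \<longleftrightarrow> occurs n f \<sigma> X Y"
proof -
  define w where "w = map f [1..<n + 1]"
  have w: "nth1 w i = f i" if "i \<in> {1..n}" for i
    unfolding w_def using that by (rule nth1_map_upt)
  have three: "{1, 2, 3} = {1..3::nat}"
    by auto
  then have \<sigma>': "\<sigma> \<in> permutations_of_set {1..3}"
    using \<sigma> by simp
  have \<sigma>_range: "nth1 \<sigma> a \<in> {1, 2, 3}" if "a \<in> {1, 2, 3}" for a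
    using image_nth1_permutation3[OF \<sigma>] that by blast
  have "length \<sigma> = 3" "length w = n"
    using length_finite_permutations_of_set[OF \<sigma>] by (simp_all add: w_def)
  then have contains: "contains w (\<sigma>, X, Y) \<longleftrightarrow> (\<exists>P. increasing3 n P \<and>
     (\<forall>a\<in>{1, 2, 3}. \<forall>b\<in>{1, 2, 3}. nth1 w (P a) < nth1 w (P b) \<longleftrightarrow> nth1 \<sigma> a < nth1 \<sigma> b) \<and>
     adjacent3 n X P \<and> adjacent3 n Y (nth1 (sorted_list_of_set ((\<lambda>a. nth1 w (P a)) ` {1, 2, 3}))))"
    by (simp add: contains_length3_iff)
  have value_set: "(\<lambda>a. nth1 w (P a)) ` {1, 2, 3} = Q ` {1, 2, 3}"
    if "increasing3 n P" "\<And>a. a \<in> {1, 2, 3} \<Longrightarrow> f (P a) = Q (nth1 \<sigma> a)" for P Q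
  proof -
    have "(\<lambda>a. nth1 w (P a)) ` {1, 2, 3} = (\<lambda>a. Q (nth1 \<sigma> a)) ` {1, 2, 3}"
      using w increasing3_range[OF that(1)] that(2) by (intro image_cong) simp_all
    also have "\<dots> = Q ` nth1 \<sigma> ` {1, 2, 3}"
      by (simp only: image_image)
    finally show ?thesis
      by (simp only: image_nth1_permutation3[OF \<sigma>])
  qed
  show ?thesis
    unfolding w_def[symmetric] contains
  proof
    assume "\<exists>P. increasing3 n P \<and>
     (\<forall>a\<in>{1, 2, 3}. \<forall>b\<in>{1, 2, 3}. nth1 w (P a) < nth1 w (P b) \<longleftrightarrow> nth1 \<sigma> a < nth1 \<sigma> b) \<and>
     adjacent3 n X P \<and> adjacent3 n Y (nth1 (sorted_list_of_set ((\<lambda>a. nth1 w (P a)) ` {1, 2, 3})))"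
    then obtain P where P: "increasing3 n P" and adjX: "adjacent3 n X P"
      and iso_w: "\<forall>a\<in>{1, 2, 3}. \<forall>b\<in>{1, 2, 3}. nth1 w (P a) < nth1 w (P b) \<longleftrightarrow> nth1 \<sigma> a < nth1 \<sigma> b"
      and adjY: "adjacent3 n Y (nth1 (sorted_list_of_set ((\<lambda>a. nth1 w (P a)) ` {1, 2, 3})))"
      by blast
    have wP: "nth1 w (P a) = f (P a)" if "a \<in> {1, 2, 3}" for a
      using w increasing3_range[OF P that] by simp
    define \<tau> where "\<tau> = inv_perm_list \<sigma>"
    have \<tau>: "nth1 \<tau> b \<in> {1, 2, 3}" "nth1 \<sigma> (nth1 \<tau> b) = b" if "b \<in> {1, 2, 3}" for b
      using nth1_inv_perm_list_mem[OF \<sigma>' that[unfolded three]]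
        nth1_nth1_inv_perm_list[OF \<sigma>' that[unfolded three]]
      unfolding \<tau>_def three by simp_all
    define Q where "Q b = f (P (nth1 \<tau> b))" for b
    have Q_less: "Q b < Q b' \<longleftrightarrow> b < b'" if "b \<in> {1, 2, 3}" "b' \<in> {1, 2, 3}" for b b'
      using iso_w[rule_format, OF \<tau>(1)[OF that(1)] \<tau>(1)[OF that(2)]] \<tau>(2)[OF that(1)] \<tau>(2)[OF that(2)]
        wP[OF \<tau>(1)[OF that(1)]] wP[OF \<tau>(1)[OF that(2)]]
      unfolding Q_def by simp
    have Q_range: "Q b \<in> {1..n}" if "b \<in> {1, 2, 3}" for b
      using permutes_in_image[OF f] increasing3_range[OF P \<tau>(1)[OF that]] unfolding Q_def by simp
    have Q: "increasing3 n Q"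
      using Q_less[of 1 2] Q_less[of 2 3] Q_range[of 1] Q_range[of 3] unfolding increasing3_def by simp
    have fPQ: "f (P a) = Q (nth1 \<sigma> a)" if "a \<in> {1, 2, 3}" for a
      using nth1_inv_perm_list_nth1[OF \<sigma>' that[unfolded three]] unfolding Q_def \<tau>_def by simp
    have "(\<lambda>a. nth1 w (P a)) ` {1, 2, 3} = Q ` {1, 2, 3}"
      by (rule value_set[OF P fPQ])
    then have "adjacent3 n Y Q"
      using adjY adjacent3_sorted_list_of_set[OF Q] by simp
    then show "occurs n f \<sigma> X Y"
      unfolding occurs_def using P Q fPQ adjX by blast
  next
    assume "occurs n f \<sigma> X Y"
    then obtain P Q where P: "increasing3 n P" and Q: "increasing3 n Q"
      and fPQ: "\<And>a. a \<in> {1, 2, 3} \<Longrightarrow> f (P a) = Q (nth1 \<sigma> a)"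
      and adjX: "adjacent3 n X P" and adjY: "adjacent3 n Y Q"
      unfolding occurs_def by blast
    have wP: "nth1 w (P a) = Q (nth1 \<sigma> a)" if "a \<in> {1, 2, 3}" for a
      using w[OF increasing3_range[OF P that]] fPQ[OF that] by simp
    have "\<forall>a\<in>{1, 2, 3}. \<forall>b\<in>{1, 2, 3}. nth1 w (P a) < nth1 w (P b) \<longleftrightarrow> nth1 \<sigma> a < nth1 \<sigma> b"
      using wP increasing3_less_iff[OF Q] \<sigma>_range by simp
    moreover have "(\<lambda>a. nth1 w (P a)) ` {1, 2, 3} = Q ` {1, 2, 3}"
      by (rule value_set[OF P fPQ])
    then have "adjacent3 n Y (nth1 (sorted_list_of_set ((\<lambda>a. nth1 w (P a)) ` {1, 2, 3})))"
      using adjY adjacent3_sorted_list_of_set[OF Q] by simp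
    ultimately show "\<exists>P. increasing3 n P \<and>
     (\<forall>a\<in>{1, 2, 3}. \<forall>b\<in>{1, 2, 3}. nth1 w (P a) < nth1 w (P b) \<longleftrightarrow> nth1 \<sigma> a < nth1 \<sigma> b) \<and>
     adjacent3 n X P \<and> adjacent3 n Y (nth1 (sorted_list_of_set ((\<lambda>a. nth1 w (P a)) ` {1, 2, 3})))"
      using P adjX by blast
  qed
qed

lemma bij_betw_permutes_Sn: "bij_betw (\<lambda>f. map f [1..<n + 1]) {f. f permutes {1..n}} (Sn n)"
proof -
  have upt: "set [1..<n + 1] = {1..n}"
    by auto
  have "inj_on (\<lambda>f. map f [1..<n + 1]) {f. f permutes {1..n}}"
  proof (rule inj_onI)
    fix f g assume f: "f \<in> {f. f permutes {1..n}}" and g: "g \<in> {f. f permutes {1..n}}"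
      and "map f [1..<n + 1] = map g [1..<n + 1]"
    then have "f i = g i" if "i \<in> {1..n}" for i
      using that upt by (metis map_eq_conv)
    moreover have "f i = g i" if "i \<notin> {1..n}" for i
      using f g that by (simp add: permutes_not_in)
    ultimately show "f = g"
      by blast
  qed
  moreover have "(\<lambda>f. map f [1..<n + 1]) ` {f. f permutes {1..n}} \<subseteq> Sn n"
  proof (rule image_subsetI)
    fix f assume "f \<in> {f. f permutes {1..n}}"
    moreover have "[1..<n + 1] \<in> permutations_of_set {1..n}"
      using upt by (auto simp: permutations_of_set_def)
    ultimately show "map f [1..<n + 1] \<in> Sn n"
      unfolding Sn_def using permutations_of_set_image_permutes by blast
  qed
  moreover have "card {f. f permutes {1..n}} = card (Sn n)"
    by (simp add: card_permutations Sn_def)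
  ultimately show ?thesis
    unfolding bij_betw_def by (simp add: card_image card_subset_eq Sn_def)
qed

lemma a_n_eq_card_not_occurs:
  assumes "\<sigma> \<in> permutations_of_set {1, 2, 3}"
  shows "a_n n (\<sigma>, X, Y) = card {f. f permutes {1..n} \<and> \<not> occurs n f \<sigma> X Y}"
proof -
  have "bij_betw (\<lambda>f. map f [1..<n + 1]) {f \<in> {f. f permutes {1..n}}. \<not> occurs n f \<sigma> X Y}
      {w \<in> Sn n. avoids w (\<sigma>, X, Y)}"
    by (rule bij_betw_Collect[OF bij_betw_permutes_Sn])
      (use contains_map_iff_occurs[OF _ assms] in \<open>simp add: avoids_def del: upt_Suc\<close>)
  then show ?thesis
    unfolding a_n_def by (simp add: bij_betw_same_card)
qed

lemma a_n_eq_fact_minus_card_occurs: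
  assumes "\<sigma> \<in> permutations_of_set {1, 2, 3}"
  shows "a_n n (\<sigma>, X, Y) = fact n - card {f. f permutes {1..n} \<and> occurs n f \<sigma> X Y}"
proof -
  have "{f. f permutes {1..n} \<and> \<not> occurs n f \<sigma> X Y}
      = {f. f permutes {1..n}} - {f. f permutes {1..n} \<and> occurs n f \<sigma> X Y}"
    by auto
  moreover have "finite {f. f permutes {1..n} \<and> occurs n f \<sigma> X Y}"
    using finite_permutations[of "{1..n}"] by (auto intro: rev_finite_subset)
  moreover have "card {f. f permutes {1..n}} = fact n"
    using card_permutations[of "{1..n}" n] by simp
  moreover have "{f. f permutes {1..n} \<and> occurs n f \<sigma> X Y} \<subseteq> {f. f permutes {1..n}}"
    by auto
  ultimately show ?thesis
    unfolding a_n_eq_card_not_occurs[OF assms] by (simp add: card_Diff_subset)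
qed

section \<open>Symmetries\<close>

definition reflect :: "nat \<Rightarrow> nat \<Rightarrow> nat" where
  "reflect n i = (if i \<in> {1..n} then n + 1 - i else i)"

lemma reflect_permutes: "reflect n permutes {1..n}"
  by (rule inj_imp_permutes) (auto simp: reflect_def inj_on_def)

lemma reflect_reflect [simp]: "reflect n (reflect n i) = i"
  by (auto simp: reflect_def)

lemma reflect_comp_reflect [simp]: "reflect n \<circ> reflect n = id"
  by (simp add: fun_eq_iff)

lemma increasing3_reflect: "increasing3 n P \<Longrightarrow> increasing3 n (\<lambda>a. n + 1 - P (4 - a))"
  unfolding increasing3_def by auto

lemma mem_image_flip3:
  assumes "X \<subseteq> {0..3}"
  shows "k \<in> (\<lambda>x. 3 - x) ` X \<longleftrightarrow> k \<le> 3 \<and> 3 - k \<in> (X :: nat set)"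
proof
  assume "k \<in> (\<lambda>x. 3 - x) ` X"
  then obtain x where "x \<in> X" "k = 3 - x"
    by blast
  then show "k \<le> 3 \<and> 3 - k \<in> X"
    using assms by (auto simp: subset_iff)
next
  assume "k \<le> 3 \<and> 3 - k \<in> X"
  then show "k \<in> (\<lambda>x. 3 - x) ` X"
    by (intro image_eqI[of k _ "3 - k"]) auto
qed

lemma image_flip3_subset: "(\<lambda>x. 3 - x) ` X \<subseteq> {0..3::nat}"
  by auto

lemma image_flip3_flip3: "X \<subseteq> {0..3} \<Longrightarrow> (\<lambda>x. 3 - x) ` (\<lambda>x. 3 - x) ` X = (X :: nat set)"
  by (force simp: image_image subset_iff intro: image_eqI)

lemma adjacent3_reflect:
  assumes "X \<subseteq> {0..3}" "increasing3 n P" "adjacent3 n X P"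
  shows "adjacent3 n ((\<lambda>x. 3 - x) ` X) (\<lambda>a. n + 1 - P (4 - a))"
  using assms(2,3) unfolding adjacent3_def mem_image_flip3[OF assms(1)] increasing3_def by auto

lemma nth1_map: "a \<in> {1..length xs} \<Longrightarrow> nth1 (map g xs) a = g (nth1 xs a)"
  by (auto simp: nth1_def)

lemma nth1_rev: "a \<in> {1..length xs} \<Longrightarrow> nth1 (rev xs) a = nth1 xs (length xs + 1 - a)"
  by (auto simp: nth1_def rev_nth Suc_diff_Suc)

lemma occurs_reverse:
  assumes "length \<sigma> = 3" "X \<subseteq> {0..3}" "occurs n f \<sigma> X Y"
  shows "occurs n (f \<circ> reflect n) (rev \<sigma>) ((\<lambda>x. 3 - x) ` X) Y"
proof -
  obtain P Q where P: "increasing3 n P" and Q: "increasing3 n Q"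
    and fPQ: "\<forall>a\<in>{1, 2, 3}. f (P a) = Q (nth1 \<sigma> a)"
    and adjX: "adjacent3 n X P" and adjY: "adjacent3 n Y Q"
    using assms(3) unfolding occurs_def by blast
  define P' where "P' a = n + 1 - P (4 - a)" for a
  have "reflect n (P' a) = P (4 - a)" if "a \<in> {1, 2, 3}" for a
    using P that unfolding P'_def increasing3_def reflect_def by auto
  then have "\<forall>a\<in>{1, 2, 3}. (f \<circ> reflect n) (P' a) = Q (nth1 (rev \<sigma>) a)"
    using fPQ assms(1) by (auto simp: nth1_rev)
  then show ?thesis
    unfolding occurs_def P'_def
    using increasing3_reflect[OF P] Q adjacent3_reflect[OF assms(2) P adjX] adjY by blast
qed

lemma occurs_complement:
  assumes "\<sigma> \<in> permutations_of_set {1, 2, 3}" "Y \<subseteq> {0..3}" "occurs n f \<sigma> X Y"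
  shows "occurs n (reflect n \<circ> f) (map (\<lambda>v. 4 - v) \<sigma>) X ((\<lambda>y. 3 - y) ` Y)"
proof -
  obtain P Q where P: "increasing3 n P" and Q: "increasing3 n Q"
    and fPQ: "\<forall>a\<in>{1, 2, 3}. f (P a) = Q (nth1 \<sigma> a)"
    and adjX: "adjacent3 n X P" and adjY: "adjacent3 n Y Q"
    using assms(3) unfolding occurs_def by blast
  define Q' where "Q' b = n + 1 - Q (4 - b)" for b
  have "reflect n (Q b) = Q' (4 - b)" if "b \<in> {1, 2, 3}" for b
    using Q that unfolding Q'_def increasing3_def reflect_def by auto
  moreover have "length \<sigma> = 3"
    using length_finite_permutations_of_set[OF assms(1)] by simp
  ultimately have "\<forall>a\<in>{1, 2, 3}. (reflect n \<circ> f) (P a) = Q' (nth1 (map (\<lambda>v. 4 - v) \<sigma>) a)"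
    using fPQ image_nth1_permutation3[OF assms(1)] by (auto simp: nth1_map)
  then show ?thesis
    unfolding occurs_def Q'_def
    using increasing3_reflect[OF Q] P adjacent3_reflect[OF assms(2) Q adjY] adjX by blast
qed

lemma occurs_inverse:
  assumes f: "f permutes {1..n}" and \<sigma>: "\<sigma> \<in> permutations_of_set {1, 2, 3}"
    and "occurs n f \<sigma> X Y"
  shows "occurs n (inv f) (inv_perm_list \<sigma>) Y X"
proof -
  obtain P Q where P: "increasing3 n P" and Q: "increasing3 n Q"
    and fPQ: "\<forall>a\<in>{1, 2, 3}. f (P a) = Q (nth1 \<sigma> a)"
    and adjX: "adjacent3 n X P" and adjY: "adjacent3 n Y Q"
    using assms(3) unfolding occurs_def by blast
  have three: "{1, 2, 3} = {1..3::nat}"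
    by auto
  have "inv f (Q b) = P (nth1 (inv_perm_list \<sigma>) b)" if "b \<in> {1, 2, 3}" for b
  proof -
    have "f (P (nth1 (inv_perm_list \<sigma>) b)) = Q b"
      using fPQ nth1_inv_perm_list_mem[OF \<sigma>[unfolded three] that[unfolded three]]
        nth1_nth1_inv_perm_list[OF \<sigma>[unfolded three] that[unfolded three]]
      unfolding three by simp
    then show ?thesis
      using permutes_inv_eq[OF f] by blast
  qed
  then show ?thesis
    unfolding occurs_def using P Q adjX adjY by blast
qed

lemma inv_perm_list_inv_perm_list:
  assumes \<sigma>: "\<sigma> \<in> permutations_of_set {1..k}"
  shows "inv_perm_list (inv_perm_list \<sigma>) = \<sigma>"
proof -
  define \<tau> where "\<tau> = inv_perm_list \<sigma>"
  have \<tau>: "\<tau> \<in> permutations_of_set {1..k}"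
    unfolding \<tau>_def using \<sigma> by (rule inv_perm_list_permutation)
  have len: "length \<sigma> = k"
    using length_finite_permutations_of_set[OF \<sigma>] by simp
  have "nth1 (inv_perm_list \<tau>) a = nth1 \<sigma> a" if "a \<in> {1..k}" for a
  proof -
    have "nth1 \<sigma> a \<in> {1..k}"
      using nth1_mem_set[of a \<sigma>] that len \<sigma> by (simp add: permutations_of_set_def)
    then have "nth1 (inv_perm_list \<tau>) (nth1 \<tau> (nth1 \<sigma> a)) = nth1 \<sigma> a"
      by (rule nth1_inv_perm_list_nth1[OF \<tau>])
    then show ?thesis
      using nth1_inv_perm_list_nth1[OF \<sigma> that] unfolding \<tau>_def by simp
  qed
  moreover have "length (inv_perm_list \<tau>) = k"
    by (simp add: inv_perm_list_def length_finite_permutations_of_set[OF \<tau>])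
  ultimately show ?thesis
    unfolding \<tau>_def[symmetric] using len by (intro nth1_equalityI) simp_all
qed

lemma permutation3_inv_perm_list:
  assumes "\<sigma> \<in> permutations_of_set {1, 2, 3}"
  shows "inv_perm_list \<sigma> \<in> permutations_of_set {1, 2, 3}"
    and "inv_perm_list (inv_perm_list \<sigma>) = \<sigma>"
proof -
  have three: "{1, 2, 3} = {1..3::nat}"
    by auto
  show "inv_perm_list \<sigma> \<in> permutations_of_set {1, 2, 3}"
    using inv_perm_list_permutation[of \<sigma> 3] assms unfolding three .
  show "inv_perm_list (inv_perm_list \<sigma>) = \<sigma>"
    using inv_perm_list_inv_perm_list[of \<sigma> 3] assms unfolding three .
qed

lemma occurs_inverse_iff:
  assumes f: "f permutes {1..n}" and \<sigma>: "\<sigma> \<in> permutations_of_set {1, 2, 3}"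
  shows "occurs n (inv f) (inv_perm_list \<sigma>) Y X \<longleftrightarrow> occurs n f \<sigma> X Y"
proof
  assume "occurs n (inv f) (inv_perm_list \<sigma>) Y X"
  from occurs_inverse[OF permutes_inv[OF f] permutation3_inv_perm_list(1)[OF \<sigma>] this]
  show "occurs n f \<sigma> X Y"
    by (simp add: permutes_inv_inv[OF f] permutation3_inv_perm_list(2)[OF \<sigma>])
qed (rule occurs_inverse[OF f \<sigma>])

lemma card_Collect_involution:
  assumes "\<And>x. P x \<Longrightarrow> P (T x)" "\<And>x. P x \<Longrightarrow> T (T x) = x" "\<And>x. P x \<Longrightarrow> A (T x) \<longleftrightarrow> B x"
  shows "card {x. P x \<and> A x} = card {x. P x \<and> B x}"
proof (rule bij_betw_same_card[symmetric], rule bij_betw_byWitness[where f' = T])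
  show "T ` {x. P x \<and> A x} \<subseteq> {x. P x \<and> B x}"
  proof (rule image_subsetI)
    fix x assume "x \<in> {x. P x \<and> A x}"
    then show "T x \<in> {x. P x \<and> B x}"
      using assms(1,2)[of x] assms(3)[of "T x"] by simp
  qed
qed (use assms in auto)

lemma a_n_eq_by_involution:
  assumes "\<sigma> \<in> permutations_of_set {1, 2, 3}" "\<sigma>' \<in> permutations_of_set {1, 2, 3}"
    and "\<And>f. f permutes {1..n} \<Longrightarrow>
      T f permutes {1..n} \<and> T (T f) = f \<and> (occurs n (T f) \<sigma>' X' Y' \<longleftrightarrow> occurs n f \<sigma> X Y)"
  shows "a_n n (\<sigma>', X', Y') = a_n n (\<sigma>, X, Y)"
  unfolding a_n_eq_card_not_occurs[OF assms(1)] a_n_eq_card_not_occurs[OF assms(2)]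
  by (rule card_Collect_involution[where T = T]) (use assms(3) in auto)

definition is_pattern3 :: "bvpattern \<Rightarrow> bool" where
  "is_pattern3 p \<longleftrightarrow> (case p of (\<sigma>, X, Y) \<Rightarrow>
     \<sigma> \<in> permutations_of_set {1, 2, 3} \<and> X \<subseteq> {0..3} \<and> Y \<subseteq> {0..3})"

lemma a_n_sym_r:
  assumes "is_pattern3 p"
  shows "is_pattern3 (sym_r p) \<and> a_n n (sym_r p) = a_n n p"
proof -
  obtain \<sigma> X Y where p: "p = (\<sigma>, X, Y)"
    by (cases p)
  have \<sigma>: "\<sigma> \<in> permutations_of_set {1, 2, 3}" and X: "X \<subseteq> {0..3}" and Y: "Y \<subseteq> {0..3}"
    using assms unfolding p is_pattern3_def by simp_all
  have len: "length \<sigma> = 3"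
    using length_finite_permutations_of_set[OF \<sigma>] by simp
  have \<sigma>': "rev \<sigma> \<in> permutations_of_set {1, 2, 3}"
    using \<sigma> by (simp add: permutations_of_set_def)
  have "a_n n (rev \<sigma>, (\<lambda>x. 3 - x) ` X, Y) = a_n n (\<sigma>, X, Y)"
  proof (rule a_n_eq_by_involution[OF \<sigma> \<sigma>', where T = "\<lambda>f. f \<circ> reflect n"])
    fix f assume "f permutes {1..n}"
    then show "f \<circ> reflect n permutes {1..n} \<and> f \<circ> reflect n \<circ> reflect n = f \<and>
        (occurs n (f \<circ> reflect n) (rev \<sigma>) ((\<lambda>x. 3 - x) ` X) Y \<longleftrightarrow> occurs n f \<sigma> X Y)"
      using permutes_compose[OF reflect_permutes] occurs_reverse[OF len X, of n f Y]
        occurs_reverse[of "rev \<sigma>" "(\<lambda>x. 3 - x) ` X" n "f \<circ> reflect n" Y] len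
      by (auto simp: image_flip3_flip3[OF X] image_flip3_subset comp_assoc)
  qed
  moreover have "sym_r (\<sigma>, X, Y) = (rev \<sigma>, (\<lambda>x. 3 - x) ` X, Y)"
    by (simp add: sym_r_def len)
  ultimately show ?thesis
    using \<sigma>' Y unfolding p by (simp add: is_pattern3_def image_flip3_subset)
qed

lemma a_n_sym_c:
  assumes "is_pattern3 p"
  shows "is_pattern3 (sym_c p) \<and> a_n n (sym_c p) = a_n n p"
proof -
  obtain \<sigma> X Y where p: "p = (\<sigma>, X, Y)"
    by (cases p)
  have \<sigma>: "\<sigma> \<in> permutations_of_set {1, 2, 3}" and X: "X \<subseteq> {0..3}" and Y: "Y \<subseteq> {0..3}"
    using assms unfolding p is_pattern3_def by simp_all
  have len: "length \<sigma> = 3"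
    using length_finite_permutations_of_set[OF \<sigma>] by simp
  have set: "set \<sigma> = {1, 2, 3}" and dist: "distinct \<sigma>"
    using \<sigma> by (simp_all add: permutations_of_set_def)
  have "inj_on (\<lambda>v. 4 - v) {1, 2, 3::nat}"
    by (auto simp: inj_on_def)
  then have \<sigma>': "map (\<lambda>v. 4 - v) \<sigma> \<in> permutations_of_set {1, 2, 3}"
    using set dist by (auto simp: permutations_of_set_def distinct_map)
  have \<sigma>'': "map ((\<lambda>v. 4 - v) \<circ> (\<lambda>v. 4 - v)) \<sigma> = \<sigma>"
    using set by (intro map_idI) auto
  have "a_n n (map (\<lambda>v. 4 - v) \<sigma>, X, (\<lambda>y. 3 - y) ` Y) = a_n n (\<sigma>, X, Y)"
  proof (rule a_n_eq_by_involution[OF \<sigma> \<sigma>', where T = "\<lambda>f. reflect n \<circ> f"])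
    fix f assume "f permutes {1..n}"
    then show "reflect n \<circ> f permutes {1..n} \<and> reflect n \<circ> (reflect n \<circ> f) = f \<and>
        (occurs n (reflect n \<circ> f) (map (\<lambda>v. 4 - v) \<sigma>) X ((\<lambda>y. 3 - y) ` Y) \<longleftrightarrow> occurs n f \<sigma> X Y)"
      using permutes_compose[OF _ reflect_permutes] occurs_complement[OF \<sigma> Y, of n f X]
        occurs_complement[OF \<sigma>' image_flip3_subset, of n "reflect n \<circ> f" X Y]
      by (auto simp: image_flip3_flip3[OF Y] \<sigma>'' comp_assoc[symmetric])
  qed
  moreover have "sym_c (\<sigma>, X, Y) = (map (\<lambda>v. 4 - v) \<sigma>, X, (\<lambda>y. 3 - y) ` Y)"
    by (simp add: sym_c_def len)
  ultimately show ?thesis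
    using \<sigma>' X unfolding p by (simp add: is_pattern3_def image_flip3_subset)
qed

lemma a_n_sym_i:
  assumes "is_pattern3 p"
  shows "is_pattern3 (sym_i p) \<and> a_n n (sym_i p) = a_n n p"
proof -
  obtain \<sigma> X Y where p: "p = (\<sigma>, X, Y)"
    by (cases p)
  have \<sigma>: "\<sigma> \<in> permutations_of_set {1, 2, 3}" and X: "X \<subseteq> {0..3}" and Y: "Y \<subseteq> {0..3}"
    using assms unfolding p is_pattern3_def by simp_all
  note \<tau> = permutation3_inv_perm_list[OF \<sigma>]
  have "a_n n (inv_perm_list \<sigma>, Y, X) = a_n n (\<sigma>, X, Y)"
    by (rule a_n_eq_by_involution[OF \<sigma> \<tau>(1), where T = inv])
      (simp add: permutes_inv permutes_inv_inv occurs_inverse_iff[OF _ \<sigma>])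
  moreover have "sym_i (\<sigma>, X, Y) = (inv_perm_list \<sigma>, Y, X)"
    by (simp add: sym_i_def)
  ultimately show ?thesis
    using \<tau>(1) X Y unfolding p by (simp add: is_pattern3_def)
qed

lemma a_n_sym_class:
  assumes "q \<in> sym_class p" "is_pattern3 p"
  shows "is_pattern3 q \<and> a_n n q = a_n n p"
  using assms(1)
proof (induction rule: sym_class.induct)
  case base
  then show ?case using assms(2) by simp
next
  case (inv q)
  then show ?case using a_n_sym_i by metis
next
  case (rev q)
  then show ?case using a_n_sym_r by metis
next
  case (comp q)
  then show ?case using a_n_sym_c by metis
qed

section \<open>The patterns of the theorem\<close>

lemma occurs_123I:
  assumes "1 \<le> p1" "p1 < p2" "p2 < p3" "p3 \<le> n" "1 \<le> f p1" "f p1 < f p2" "f p2 < f p3" "f p3 \<le> n"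
    and "adjacent3 n X (nth1 [p1, p2, p3])" "adjacent3 n Y (nth1 [f p1, f p2, f p3])"
  shows "occurs n f [1, 2, 3] X Y"
  unfolding occurs_def
  by (rule exI[of _ "nth1 [p1, p2, p3]"], rule exI[of _ "nth1 [f p1, f p2, f p3]"])
    (use assms in \<open>simp add: increasing3_def nth1_def\<close>)

lemma occurs_132I:
  assumes "1 \<le> p1" "p1 < p2" "p2 < p3" "p3 \<le> n" "1 \<le> f p1" "f p1 < f p3" "f p3 < f p2" "f p2 \<le> n"
    and "adjacent3 n X (nth1 [p1, p2, p3])" "adjacent3 n Y (nth1 [f p1, f p3, f p2])"
  shows "occurs n f [1, 3, 2] X Y"
  unfolding occurs_def
  by (rule exI[of _ "nth1 [p1, p2, p3]"], rule exI[of _ "nth1 [f p1, f p3, f p2]"])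
    (use assms in \<open>simp add: increasing3_def nth1_def\<close>)

lemma permutes_inv_simps:
  assumes "f permutes S"
  shows "f x = y \<longleftrightarrow> inv f y = x" "inv f x = inv f y \<longleftrightarrow> x = y"
    "inv f (f x) = x" "f (inv f y) = y"
  using permutes_inv_eq[OF assms] inj_eq[OF permutes_inj[OF permutes_inv[OF assms]]]
    permutes_inverses[OF assms] by auto

lemma card_occurs_value_not_value:
  assumes "\<And>f. f permutes {1..n} \<Longrightarrow> occurs n f \<sigma> X Y \<longleftrightarrow> f i = v \<and> f i' \<noteq> v'"
    and "i \<in> {1..n}" "i' \<in> {1..n}" "v \<in> {1..n}" "v' \<in> {1..n}" "i \<noteq> i'" "v \<noteq> v'"
  shows "card {f. f permutes {1..n} \<and> occurs n f \<sigma> X Y} = fact (n - 2) * (n - 2)"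
  using card_permutes_value_not_value[of "{1..n}" i i' v v'] assms
  by (simp cong: conj_cong)

lemma card_occurs_pairs:
  assumes "\<And>f. f permutes {1..n} \<Longrightarrow> occurs n f \<sigma> X Y \<longleftrightarrow> (\<exists>k\<in>K. takes_values f (cs k))"
    and "finite K" "card K = n - 2"
    and "\<And>k. k \<in> K \<Longrightarrow> partial_perm {1..n} (cs k) \<and> length (cs k) = 2"
    and "\<And>k k'. k \<in> K \<Longrightarrow> k' \<in> K \<Longrightarrow>
      \<forall>(i, v)\<in>set (cs k). \<forall>(i', v')\<in>set (cs k'). i = i' \<longleftrightarrow> v = v' \<Longrightarrow> k = k'"
  shows "card {f. f permutes {1..n} \<and> occurs n f \<sigma> X Y} = fact (n - 2) * (n - 2)"
  using card_permutes_takes_values_Union[of "{1..n}" K cs 2] assms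
  by (simp cong: conj_cong)

lemma card_occurs_triples:
  assumes "\<And>f. f permutes {1..n} \<Longrightarrow> occurs n f \<sigma> X Y \<longleftrightarrow> (\<exists>a\<in>A. \<exists>b\<in>B. takes_values f (cs a b))"
    and "finite A" "finite B" "card A = n - 2" "card B = n - 2"
    and "\<And>a b. a \<in> A \<Longrightarrow> b \<in> B \<Longrightarrow> partial_perm {1..n} (cs a b) \<and> length (cs a b) = 3"
    and "\<And>a b a' b'. a \<in> A \<Longrightarrow> b \<in> B \<Longrightarrow> a' \<in> A \<Longrightarrow> b' \<in> B \<Longrightarrow>
      \<forall>(i, v)\<in>set (cs a b). \<forall>(i', v')\<in>set (cs a' b'). i = i' \<longleftrightarrow> v = v' \<Longrightarrow> a = a' \<and> b = b'"
  shows "card {f. f permutes {1..n} \<and> occurs n f \<sigma> X Y} = fact (n - 2) * (n - 2)"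
proof -
  have "{f. f permutes {1..n} \<and> occurs n f \<sigma> X Y}
      = {f. f permutes {1..n} \<and> (\<exists>k\<in>A \<times> B. takes_values f (case_prod cs k))}"
    using assms(1) by auto
  also have "card \<dots> = card (A \<times> B) * fact (card {1..n} - 3)"
  proof (rule card_permutes_takes_values_Union)
    show "finite (A \<times> B)"
      using assms(2,3) by simp
    show "partial_perm {1..n} (case_prod cs k) \<and> length (case_prod cs k) = 3" if "k \<in> A \<times> B" for k
      using assms(6) that by (cases k) auto
    show "k = k'" if "k \<in> A \<times> B" "k' \<in> A \<times> B"
      and "\<forall>(i, v)\<in>set (case_prod cs k). \<forall>(i', v')\<in>set (case_prod cs k'). i = i' \<longleftrightarrow> v = v'" for k k'
      using assms(7) that by (cases k; cases k') auto
  qed simp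
  also have "\<dots> = fact (n - 2) * (n - 2)"
  proof (cases "n \<ge> 3")
    case True
    then obtain m where "n = m + 3"
      by (metis add.commute le_Suc_ex)
    then show ?thesis
      using assms(4,5) by (simp add: card_cartesian_product algebra_simps)
  qed (use assms(4,5) in \<open>auto simp: card_cartesian_product\<close>)
  finally show ?thesis .
qed

context
  fixes f :: "nat \<Rightarrow> nat" and n :: nat
  assumes f: "f permutes {1..n}" and n: "2 \<le> n"
begin

private lemmas f_eq_iff = inj_eq[OF permutes_inj[OF f]]
private lemmas f_inv = permutes_inverses(1)[OF f]
private lemmas range_simps = permutes_in_image[OF f] permutes_in_image[OF permutes_inv[OF f]]
private lemmas value_simps = f_eq_iff range_simps permutes_inv_eq[OF f] f_inv
private lemmas inv_simps = permutes_inv_simps[OF f]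

lemma occurs_123_0_01_iff:
  "occurs n f [1, 2, 3] {0} {0, 1} \<longleftrightarrow> f 1 = 1 \<and> f n \<noteq> 2"
proof
  show "f 1 = 1 \<and> f n \<noteq> 2" if "occurs n f [1, 2, 3] {0} {0, 1}"
    using that unfolding occurs_def increasing3_def adjacent3_def
    by (auto simp: nth1_def inv_simps numeral_2_eq_2)
next
  assume vals: "f 1 = 1 \<and> f n \<noteq> 2"
  have "inv f 2 \<in> {1..n}" "f n \<in> {1..n}"
    unfolding range_simps using vals n by auto
  moreover have "inv f 2 \<noteq> 1" "inv f 2 \<noteq> n"
    using vals n calculation by (auto simp: value_simps)
  moreover have "f n \<noteq> f 1"
    using n calculation by (auto simp: f_eq_iff)
  ultimately show "occurs n f [1, 2, 3] {0} {0, 1}"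
    using vals n by (intro occurs_123I[of 1 "inv f 2" n])
      (auto simp: adjacent3_def nth1_def f_inv)
qed

lemma occurs_123_0_03_iff:
  "occurs n f [1, 2, 3] {0} {0, 3} \<longleftrightarrow> f 1 = 1 \<and> f 2 \<noteq> n"
proof
  show "f 1 = 1 \<and> f 2 \<noteq> n" if "occurs n f [1, 2, 3] {0} {0, 3}"
    using that unfolding occurs_def increasing3_def adjacent3_def
    by (auto simp: nth1_def inv_simps numeral_2_eq_2)
next
  assume vals: "f 1 = 1 \<and> f 2 \<noteq> n"
  have "inv f n \<in> {1..n}" "f 2 \<in> {1..n}"
    unfolding range_simps using vals n by auto
  moreover have "inv f n \<noteq> 1" "inv f n \<noteq> 2"
    using vals n calculation by (auto simp: value_simps)
  moreover have "f 2 \<noteq> f 1"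
    using n calculation by (auto simp: f_eq_iff)
  ultimately show "occurs n f [1, 2, 3] {0} {0, 3}"
    using vals n by (intro occurs_123I[of 1 2 "inv f n"])
      (auto simp: adjacent3_def nth1_def f_inv)
qed

lemma occurs_123_1_01_iff:
  "occurs n f [1, 2, 3] {1} {0, 1} \<longleftrightarrow>
    (\<exists>i\<in>{1..n - 2}. takes_values f [(i, 1), (i + 1, 2)])"
proof
  show "(\<exists>i\<in>{1..n - 2}. takes_values f [(i, 1), (i + 1, 2)])"
    if "occurs n f [1, 2, 3] {1} {0, 1}"
    using that unfolding occurs_def increasing3_def adjacent3_def
    by (auto simp: nth1_def inv_simps numeral_2_eq_2)
next
  assume "(\<exists>i\<in>{1..n - 2}. takes_values f [(i, 1), (i + 1, 2)])"
  then obtain i where bounds: "i \<in> {1..n - 2}" and vals: "f i = 1 \<and> f (i + 1) = 2"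
    by auto
  have "f n \<in> {1..n}"
    unfolding range_simps using vals n bounds by auto
  moreover have "f n \<noteq> f i" "f n \<noteq> f (i + 1)"
    using n bounds calculation by (auto simp: f_eq_iff)
  ultimately show "occurs n f [1, 2, 3] {1} {0, 1}"
    using vals n bounds by (intro occurs_123I[of i "i + 1" n])
      (auto simp: adjacent3_def nth1_def f_inv)
qed

lemma occurs_123_01_02_iff:
  "occurs n f [1, 2, 3] {0, 1} {0, 2} \<longleftrightarrow> f 1 = 1 \<and> f 2 \<noteq> n"
proof
  show "f 1 = 1 \<and> f 2 \<noteq> n" if "occurs n f [1, 2, 3] {0, 1} {0, 2}"
    using that unfolding occurs_def increasing3_def adjacent3_def
    by (auto simp: nth1_def numeral_2_eq_2)
next
  assume vals: "f 1 = 1 \<and> f 2 \<noteq> n"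
  have "f 2 \<in> {1..n}"
    unfolding range_simps using vals n by auto
  moreover have "f 2 \<noteq> f 1"
    using n calculation by (auto simp: f_eq_iff)
  moreover have "inv f (f 2 + 1) \<in> {1..n}"
    unfolding range_simps using vals n calculation by auto
  moreover have "inv f (f 2 + 1) \<noteq> 1" "inv f (f 2 + 1) \<noteq> 2"
    using vals n calculation by (auto simp: value_simps)
  ultimately show "occurs n f [1, 2, 3] {0, 1} {0, 2}"
    using vals n by (intro occurs_123I[of 1 2 "inv f (f 2 + 1)"])
      (auto simp: adjacent3_def nth1_def f_inv)
qed

lemma occurs_123_01_12_iff:
  "occurs n f [1, 2, 3] {0, 1} {1, 2} \<longleftrightarrow>
    (\<exists>a\<in>{1..n - 2}. takes_values f [(1, a), (2, a + 1)])"
proof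
  show "(\<exists>a\<in>{1..n - 2}. takes_values f [(1, a), (2, a + 1)])"
    if "occurs n f [1, 2, 3] {0, 1} {1, 2}"
    using that unfolding occurs_def increasing3_def adjacent3_def
    by (auto simp: nth1_def inv_simps numeral_2_eq_2)
next
  assume "(\<exists>a\<in>{1..n - 2}. takes_values f [(1, a), (2, a + 1)])"
  then obtain a where bounds: "a \<in> {1..n - 2}" and vals: "f 1 = a \<and> f 2 = a + 1"
    by auto
  have "inv f (a + 2) \<in> {1..n}"
    unfolding range_simps using vals n bounds by auto
  moreover have "inv f (a + 2) \<noteq> 1" "inv f (a + 2) \<noteq> 2"
    using vals n bounds calculation by (auto simp: value_simps)
  ultimately show "occurs n f [1, 2, 3] {0, 1} {1, 2}"
    using vals n bounds by (intro occurs_123I[of 1 2 "inv f (a + 2)"])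
      (auto simp: adjacent3_def nth1_def f_inv)
qed

lemma occurs_123_01_03_iff:
  "occurs n f [1, 2, 3] {0, 1} {0, 3} \<longleftrightarrow> f 1 = 1 \<and> f 2 \<noteq> n"
proof
  show "f 1 = 1 \<and> f 2 \<noteq> n" if "occurs n f [1, 2, 3] {0, 1} {0, 3}"
    using that unfolding occurs_def increasing3_def adjacent3_def
    by (auto simp: nth1_def inv_simps numeral_2_eq_2)
next
  assume vals: "f 1 = 1 \<and> f 2 \<noteq> n"
  have "inv f n \<in> {1..n}" "f 2 \<in> {1..n}"
    unfolding range_simps using vals n by auto
  moreover have "inv f n \<noteq> 1" "inv f n \<noteq> 2"
    using vals n calculation by (auto simp: value_simps)
  moreover have "f 2 \<noteq> f 1"
    using n calculation by (auto simp: f_eq_iff)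
  ultimately show "occurs n f [1, 2, 3] {0, 1} {0, 3}"
    using vals n by (intro occurs_123I[of 1 2 "inv f n"])
      (auto simp: adjacent3_def nth1_def f_inv)
qed

lemma occurs_123_01_13_iff:
  "occurs n f [1, 2, 3] {0, 1} {1, 3} \<longleftrightarrow>
    (\<exists>a\<in>{1..n - 2}. takes_values f [(1, a), (2, a + 1)])"
proof
  show "(\<exists>a\<in>{1..n - 2}. takes_values f [(1, a), (2, a + 1)])"
    if "occurs n f [1, 2, 3] {0, 1} {1, 3}"
    using that unfolding occurs_def increasing3_def adjacent3_def
    by (auto simp: nth1_def inv_simps numeral_2_eq_2)
next
  assume "(\<exists>a\<in>{1..n - 2}. takes_values f [(1, a), (2, a + 1)])"
  then obtain a where bounds: "a \<in> {1..n - 2}" and vals: "f 1 = a \<and> f 2 = a + 1"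
    by auto
  have "inv f n \<in> {1..n}"
    unfolding range_simps using vals n bounds by auto
  moreover have "inv f n \<noteq> 1" "inv f n \<noteq> 2"
    using vals n bounds calculation by (auto simp: value_simps)
  ultimately show "occurs n f [1, 2, 3] {0, 1} {1, 3}"
    using vals n bounds by (intro occurs_123I[of 1 2 "inv f n"])
      (auto simp: adjacent3_def nth1_def f_inv)
qed

lemma occurs_123_01_23_iff:
  "occurs n f [1, 2, 3] {0, 1} {2, 3} \<longleftrightarrow> f 2 = n - 1 \<and> f 1 \<noteq> n"
proof
  show "f 2 = n - 1 \<and> f 1 \<noteq> n" if "occurs n f [1, 2, 3] {0, 1} {2, 3}"
    using that unfolding occurs_def increasing3_def adjacent3_def
    by (auto simp: nth1_def inv_simps numeral_2_eq_2)
next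
  assume vals: "f 2 = n - 1 \<and> f 1 \<noteq> n"
  have "inv f n \<in> {1..n}" "f 1 \<in> {1..n}"
    unfolding range_simps using vals n by auto
  moreover have "inv f n \<noteq> 1" "inv f n \<noteq> 2"
    using vals n calculation by (auto simp: value_simps)
  moreover have "f 1 \<noteq> f 2"
    using n calculation by (auto simp: f_eq_iff)
  ultimately show "occurs n f [1, 2, 3] {0, 1} {2, 3}"
    using vals n by (intro occurs_123I[of 1 2 "inv f n"])
      (auto simp: adjacent3_def nth1_def f_inv)
qed

lemma occurs_123_02_12_iff:
  "occurs n f [1, 2, 3] {0, 2} {1, 2} \<longleftrightarrow>
    (\<exists>a\<in>{1..n - 2}. \<exists>i\<in>{2..n - 1}. takes_values f [(1, a), (i, a + 1), (i + 1, a + 2)])"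
proof
  show "(\<exists>a\<in>{1..n - 2}. \<exists>i\<in>{2..n - 1}. takes_values f [(1, a), (i, a + 1), (i + 1, a + 2)])"
    if "occurs n f [1, 2, 3] {0, 2} {1, 2}"
    using that unfolding occurs_def increasing3_def adjacent3_def
    by (auto simp: nth1_def inv_simps numeral_2_eq_2)
next
  assume "(\<exists>a\<in>{1..n - 2}. \<exists>i\<in>{2..n - 1}. takes_values f [(1, a), (i, a + 1), (i + 1, a + 2)])"
  then obtain a i where bounds: "a \<in> {1..n - 2}" "i \<in> {2..n - 1}"
    and vals: "f 1 = a \<and> f i = a + 1 \<and> f (i + 1) = a + 2"
    by auto
  show "occurs n f [1, 2, 3] {0, 2} {1, 2}"
    using vals n bounds by (intro occurs_123I[of 1 i "i + 1"])
      (auto simp: adjacent3_def nth1_def f_inv)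
qed

lemma occurs_123_02_03_iff:
  "occurs n f [1, 2, 3] {0, 2} {0, 3} \<longleftrightarrow> f 1 = 1 \<and> f 2 \<noteq> n"
proof
  show "f 1 = 1 \<and> f 2 \<noteq> n" if "occurs n f [1, 2, 3] {0, 2} {0, 3}"
    using that unfolding occurs_def increasing3_def adjacent3_def
    by (auto simp: nth1_def inv_simps numeral_2_eq_2)
next
  assume vals: "f 1 = 1 \<and> f 2 \<noteq> n"
  have "inv f n \<in> {1..n}"
    unfolding range_simps using vals n by auto
  moreover have "inv f n \<noteq> 1" "inv f n \<noteq> 2"
    using vals n calculation by (auto simp: value_simps)
  moreover have "f (inv f n - 1) \<in> {1..n}"
    unfolding range_simps using vals n calculation by auto
  moreover have "f (inv f n - 1) \<noteq> f 1" "f (inv f n - 1) \<noteq> f (inv f n)"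
    using n calculation by (auto simp: f_eq_iff)
  ultimately show "occurs n f [1, 2, 3] {0, 2} {0, 3}"
    using vals n by (intro occurs_123I[of 1 "inv f n - 1" "inv f n"])
      (auto simp: adjacent3_def nth1_def f_inv)
qed

lemma occurs_123_02_13_iff:
  "occurs n f [1, 2, 3] {0, 2} {1, 3} \<longleftrightarrow>
    (\<exists>a\<in>{1..n - 2}. \<exists>i\<in>{2..n - 1}. takes_values f [(1, a), (i, a + 1), (i + 1, n)])"
proof
  show "(\<exists>a\<in>{1..n - 2}. \<exists>i\<in>{2..n - 1}. takes_values f [(1, a), (i, a + 1), (i + 1, n)])"
    if "occurs n f [1, 2, 3] {0, 2} {1, 3}"
    using that unfolding occurs_def increasing3_def adjacent3_def
    by (auto simp: nth1_def inv_simps numeral_2_eq_2)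
next
  assume "(\<exists>a\<in>{1..n - 2}. \<exists>i\<in>{2..n - 1}. takes_values f [(1, a), (i, a + 1), (i + 1, n)])"
  then obtain a i where bounds: "a \<in> {1..n - 2}" "i \<in> {2..n - 1}"
    and vals: "f 1 = a \<and> f i = a + 1 \<and> f (i + 1) = n"
    by auto
  show "occurs n f [1, 2, 3] {0, 2} {1, 3}"
    using vals n bounds by (intro occurs_123I[of 1 i "i + 1"])
      (auto simp: adjacent3_def nth1_def f_inv)
qed

lemma occurs_123_12_03_iff:
  "occurs n f [1, 2, 3] {1, 2} {0, 3} \<longleftrightarrow>
    (\<exists>i\<in>{1..n - 2}. takes_values f [(i, 1), (i + 2, n)])"
proof
  show "(\<exists>i\<in>{1..n - 2}. takes_values f [(i, 1), (i + 2, n)])"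
    if "occurs n f [1, 2, 3] {1, 2} {0, 3}"
    using that unfolding occurs_def increasing3_def adjacent3_def
    by (auto simp: nth1_def inv_simps numeral_2_eq_2)
next
  assume "(\<exists>i\<in>{1..n - 2}. takes_values f [(i, 1), (i + 2, n)])"
  then obtain i where bounds: "i \<in> {1..n - 2}" and vals: "f i = 1 \<and> f (i + 2) = n"
    by auto
  have "f (i + 1) \<in> {1..n}"
    unfolding range_simps using vals n bounds by auto
  moreover have "f (i + 1) \<noteq> f i" "f (i + 1) \<noteq> f (i + 2)"
    using n bounds calculation by (auto simp: f_eq_iff)
  ultimately show "occurs n f [1, 2, 3] {1, 2} {0, 3}"
    using vals n bounds by (intro occurs_123I[of i "i + 1" "i + 2"])
      (auto simp: adjacent3_def nth1_def f_inv)
qed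

lemma occurs_132_0_01_iff:
  "occurs n f [1, 3, 2] {0} {0, 1} \<longleftrightarrow> f 1 = 1 \<and> f 2 \<noteq> 2"
proof
  show "f 1 = 1 \<and> f 2 \<noteq> 2" if "occurs n f [1, 3, 2] {0} {0, 1}"
    using that unfolding occurs_def increasing3_def adjacent3_def
    by (auto simp: nth1_def inv_simps numeral_2_eq_2)
next
  assume vals: "f 1 = 1 \<and> f 2 \<noteq> 2"
  have "inv f 2 \<in> {1..n}" "f 2 \<in> {1..n}"
    unfolding range_simps using vals n by auto
  moreover have "inv f 2 \<noteq> 1" "inv f 2 \<noteq> 2"
    using vals n calculation by (auto simp: value_simps)
  moreover have "f 2 \<noteq> f 1"
    using n calculation by (auto simp: f_eq_iff)
  ultimately show "occurs n f [1, 3, 2] {0} {0, 1}"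
    using vals n by (intro occurs_132I[of 1 2 "inv f 2"])
      (auto simp: adjacent3_def nth1_def f_inv)
qed

lemma occurs_132_0_03_iff:
  "occurs n f [1, 3, 2] {0} {0, 3} \<longleftrightarrow> f 1 = 1 \<and> f n \<noteq> n"
proof
  show "f 1 = 1 \<and> f n \<noteq> n" if "occurs n f [1, 3, 2] {0} {0, 3}"
    using that unfolding occurs_def increasing3_def adjacent3_def
    by (auto simp: nth1_def inv_simps numeral_2_eq_2)
next
  assume vals: "f 1 = 1 \<and> f n \<noteq> n"
  have "inv f n \<in> {1..n}" "f n \<in> {1..n}"
    unfolding range_simps using vals n by auto
  moreover have "inv f n \<noteq> 1" "inv f n \<noteq> n"
    using vals n calculation by (auto simp: value_simps)
  moreover have "f n \<noteq> f 1"
    using n calculation by (auto simp: f_eq_iff)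
  ultimately show "occurs n f [1, 3, 2] {0} {0, 3}"
    using vals n by (intro occurs_132I[of 1 "inv f n" n])
      (auto simp: adjacent3_def nth1_def f_inv)
qed

lemma occurs_132_1_03_iff:
  "occurs n f [1, 3, 2] {1} {0, 3} \<longleftrightarrow>
    (\<exists>i\<in>{1..n - 2}. takes_values f [(i, 1), (i + 1, n)])"
proof
  show "(\<exists>i\<in>{1..n - 2}. takes_values f [(i, 1), (i + 1, n)])"
    if "occurs n f [1, 3, 2] {1} {0, 3}"
    using that unfolding occurs_def increasing3_def adjacent3_def
    by (auto simp: nth1_def inv_simps numeral_2_eq_2)
next
  assume "(\<exists>i\<in>{1..n - 2}. takes_values f [(i, 1), (i + 1, n)])"
  then obtain i where bounds: "i \<in> {1..n - 2}" and vals: "f i = 1 \<and> f (i + 1) = n"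
    by auto
  have "f n \<in> {1..n}"
    unfolding range_simps using vals n bounds by auto
  moreover have "f n \<noteq> f i" "f n \<noteq> f (i + 1)"
    using n bounds calculation by (auto simp: f_eq_iff)
  ultimately show "occurs n f [1, 3, 2] {1} {0, 3}"
    using vals n bounds by (intro occurs_132I[of i "i + 1" n])
      (auto simp: adjacent3_def nth1_def f_inv)
qed

lemma occurs_132_01_01_iff:
  "occurs n f [1, 3, 2] {0, 1} {0, 1} \<longleftrightarrow> f 1 = 1 \<and> f 2 \<noteq> 2"
proof
  show "f 1 = 1 \<and> f 2 \<noteq> 2" if "occurs n f [1, 3, 2] {0, 1} {0, 1}"
    using that unfolding occurs_def increasing3_def adjacent3_def
    by (auto simp: nth1_def inv_simps numeral_2_eq_2)
next
  assume vals: "f 1 = 1 \<and> f 2 \<noteq> 2"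
  have "inv f 2 \<in> {1..n}" "f 2 \<in> {1..n}"
    unfolding range_simps using vals n by auto
  moreover have "inv f 2 \<noteq> 1" "inv f 2 \<noteq> 2"
    using vals n calculation by (auto simp: value_simps)
  moreover have "f 2 \<noteq> f 1"
    using n calculation by (auto simp: f_eq_iff)
  ultimately show "occurs n f [1, 3, 2] {0, 1} {0, 1}"
    using vals n by (intro occurs_132I[of 1 2 "inv f 2"])
      (auto simp: adjacent3_def nth1_def f_inv)
qed

lemma occurs_132_01_02_iff:
  "occurs n f [1, 3, 2] {0, 1} {0, 2} \<longleftrightarrow> f 1 = 1 \<and> f 2 \<noteq> 2"
proof
  show "f 1 = 1 \<and> f 2 \<noteq> 2" if "occurs n f [1, 3, 2] {0, 1} {0, 2}"
    using that unfolding occurs_def increasing3_def adjacent3_def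
    by (auto simp: nth1_def numeral_2_eq_2)
next
  assume vals: "f 1 = 1 \<and> f 2 \<noteq> 2"
  have "f 2 \<in> {1..n}"
    unfolding range_simps using vals n by auto
  moreover have "f 2 \<noteq> f 1"
    using n calculation by (auto simp: f_eq_iff)
  moreover have "inv f (f 2 - 1) \<in> {1..n}"
    unfolding range_simps using vals n calculation by auto
  moreover have "inv f (f 2 - 1) \<noteq> 1" "inv f (f 2 - 1) \<noteq> 2"
    using vals n calculation by (auto simp: value_simps)
  ultimately show "occurs n f [1, 3, 2] {0, 1} {0, 2}"
    using vals n by (intro occurs_132I[of 1 2 "inv f (f 2 - 1)"])
      (auto simp: adjacent3_def nth1_def f_inv)
qed

lemma occurs_132_01_12_iff:
  "occurs n f [1, 3, 2] {0, 1} {1, 2} \<longleftrightarrow>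
    (\<exists>a\<in>{1..n - 2}. takes_values f [(1, a), (2, a + 2)])"
proof
  show "(\<exists>a\<in>{1..n - 2}. takes_values f [(1, a), (2, a + 2)])"
    if "occurs n f [1, 3, 2] {0, 1} {1, 2}"
    using that unfolding occurs_def increasing3_def adjacent3_def
    by (auto simp: nth1_def inv_simps numeral_2_eq_2)
next
  assume "(\<exists>a\<in>{1..n - 2}. takes_values f [(1, a), (2, a + 2)])"
  then obtain a where bounds: "a \<in> {1..n - 2}" and vals: "f 1 = a \<and> f 2 = a + 2"
    by auto
  have "inv f (a + 1) \<in> {1..n}"
    unfolding range_simps using vals n bounds by auto
  moreover have "inv f (a + 1) \<noteq> 1" "inv f (a + 1) \<noteq> 2"
    using vals n bounds calculation by (auto simp: value_simps)
  ultimately show "occurs n f [1, 3, 2] {0, 1} {1, 2}"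
    using vals n bounds by (intro occurs_132I[of 1 2 "inv f (a + 1)"])
      (auto simp: adjacent3_def nth1_def f_inv)
qed

lemma occurs_132_01_3_iff:
  "occurs n f [1, 3, 2] {0, 1} {3} \<longleftrightarrow> f 2 = n \<and> f 1 \<noteq> n - 1"
proof
  show "f 2 = n \<and> f 1 \<noteq> n - 1" if "occurs n f [1, 3, 2] {0, 1} {3}"
    using that unfolding occurs_def increasing3_def adjacent3_def
    by (auto simp: nth1_def numeral_2_eq_2)
next
  assume vals: "f 2 = n \<and> f 1 \<noteq> n - 1"
  have "inv f (n - 1) \<in> {1..n}" "f 1 \<in> {1..n}"
    unfolding range_simps using vals n by auto
  moreover have "inv f (n - 1) \<noteq> 1" "inv f (n - 1) \<noteq> 2"
    using vals n calculation by (auto simp: value_simps)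
  moreover have "f 1 \<noteq> f 2"
    using n calculation by (auto simp: f_eq_iff)
  ultimately show "occurs n f [1, 3, 2] {0, 1} {3}"
    using vals n by (intro occurs_132I[of 1 2 "inv f (n - 1)"])
      (auto simp: adjacent3_def nth1_def f_inv)
qed

lemma occurs_132_01_13_iff:
  "occurs n f [1, 3, 2] {0, 1} {1, 3} \<longleftrightarrow> f 2 = n \<and> f 1 \<noteq> n - 1"
proof
  show "f 2 = n \<and> f 1 \<noteq> n - 1" if "occurs n f [1, 3, 2] {0, 1} {1, 3}"
    using that unfolding occurs_def increasing3_def adjacent3_def
    by (auto simp: nth1_def numeral_2_eq_2)
next
  assume vals: "f 2 = n \<and> f 1 \<noteq> n - 1"
  have "f 1 \<in> {1..n}"
    unfolding range_simps using vals n by auto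
  moreover have "f 1 \<noteq> f 2"
    using n calculation by (auto simp: f_eq_iff)
  moreover have "inv f (f 1 + 1) \<in> {1..n}"
    unfolding range_simps using vals n calculation by auto
  moreover have "inv f (f 1 + 1) \<noteq> 1" "inv f (f 1 + 1) \<noteq> 2"
    using vals n calculation by (auto simp: value_simps)
  ultimately show "occurs n f [1, 3, 2] {0, 1} {1, 3}"
    using vals n by (intro occurs_132I[of 1 2 "inv f (f 1 + 1)"])
      (auto simp: adjacent3_def nth1_def f_inv)
qed

lemma occurs_132_01_23_iff:
  "occurs n f [1, 3, 2] {0, 1} {2, 3} \<longleftrightarrow> f 2 = n \<and> f 1 \<noteq> n - 1"
proof
  show "f 2 = n \<and> f 1 \<noteq> n - 1" if "occurs n f [1, 3, 2] {0, 1} {2, 3}"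
    using that unfolding occurs_def increasing3_def adjacent3_def
    by (auto simp: nth1_def inv_simps numeral_2_eq_2)
next
  assume vals: "f 2 = n \<and> f 1 \<noteq> n - 1"
  have "inv f (n - 1) \<in> {1..n}" "f 1 \<in> {1..n}"
    unfolding range_simps using vals n by auto
  moreover have "inv f (n - 1) \<noteq> 1" "inv f (n - 1) \<noteq> 2"
    using vals n calculation by (auto simp: value_simps)
  moreover have "f 1 \<noteq> f 2"
    using n calculation by (auto simp: f_eq_iff)
  ultimately show "occurs n f [1, 3, 2] {0, 1} {2, 3}"
    using vals n by (intro occurs_132I[of 1 2 "inv f (n - 1)"])
      (auto simp: adjacent3_def nth1_def f_inv)
qed

lemma occurs_132_2_23_iff:
  "occurs n f [1, 3, 2] {2} {2, 3} \<longleftrightarrow>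
    (\<exists>i\<in>{2..n - 1}. takes_values f [(i, n), (i + 1, n - 1)])"
proof
  show "(\<exists>i\<in>{2..n - 1}. takes_values f [(i, n), (i + 1, n - 1)])"
    if "occurs n f [1, 3, 2] {2} {2, 3}"
    using that unfolding occurs_def increasing3_def adjacent3_def
    by (auto simp: nth1_def inv_simps numeral_2_eq_2)
next
  assume "(\<exists>i\<in>{2..n - 1}. takes_values f [(i, n), (i + 1, n - 1)])"
  then obtain i where bounds: "i \<in> {2..n - 1}" and vals: "f i = n \<and> f (i + 1) = n - 1"
    by auto
  have "f 1 \<in> {1..n}"
    unfolding range_simps using vals n bounds by auto
  moreover have "f 1 \<noteq> f i" "f 1 \<noteq> f (i + 1)"
    using n bounds calculation by (auto simp: f_eq_iff)
  ultimately show "occurs n f [1, 3, 2] {2} {2, 3}"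
    using vals n bounds by (intro occurs_132I[of 1 i "i + 1"])
      (auto simp: adjacent3_def nth1_def f_inv)
qed

lemma occurs_132_02_12_iff:
  "occurs n f [1, 3, 2] {0, 2} {1, 2} \<longleftrightarrow>
    (\<exists>a\<in>{1..n - 2}. \<exists>i\<in>{2..n - 1}. takes_values f [(1, a), (i, a + 2), (i + 1, a + 1)])"
proof
  show "(\<exists>a\<in>{1..n - 2}. \<exists>i\<in>{2..n - 1}. takes_values f [(1, a), (i, a + 2), (i + 1, a + 1)])"
    if "occurs n f [1, 3, 2] {0, 2} {1, 2}"
    using that unfolding occurs_def increasing3_def adjacent3_def
    by (auto simp: nth1_def inv_simps numeral_2_eq_2)
next
  assume "(\<exists>a\<in>{1..n - 2}. \<exists>i\<in>{2..n - 1}. takes_values f [(1, a), (i, a + 2), (i + 1, a + 1)])"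
  then obtain a i where bounds: "a \<in> {1..n - 2}" "i \<in> {2..n - 1}"
    and vals: "f 1 = a \<and> f i = a + 2 \<and> f (i + 1) = a + 1"
    by auto
  show "occurs n f [1, 3, 2] {0, 2} {1, 2}"
    using vals n bounds by (intro occurs_132I[of 1 i "i + 1"])
      (auto simp: adjacent3_def nth1_def f_inv)
qed

lemma occurs_132_02_03_iff:
  "occurs n f [1, 3, 2] {0, 2} {0, 3} \<longleftrightarrow> f 1 = 1 \<and> f n \<noteq> n"
proof
  show "f 1 = 1 \<and> f n \<noteq> n" if "occurs n f [1, 3, 2] {0, 2} {0, 3}"
    using that unfolding occurs_def increasing3_def adjacent3_def
    by (auto simp: nth1_def inv_simps numeral_2_eq_2)
next
  assume vals: "f 1 = 1 \<and> f n \<noteq> n"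
  have "inv f n \<in> {1..n}"
    unfolding range_simps using vals n by auto
  moreover have "inv f n \<noteq> 1" "inv f n \<noteq> n"
    using vals n calculation by (auto simp: value_simps)
  moreover have "f (inv f n + 1) \<in> {1..n}"
    unfolding range_simps using vals n calculation by auto
  moreover have "f (inv f n + 1) \<noteq> f 1" "f (inv f n + 1) \<noteq> f (inv f n)"
    using n calculation by (auto simp: f_eq_iff)
  ultimately show "occurs n f [1, 3, 2] {0, 2} {0, 3}"
    using vals n by (intro occurs_132I[of 1 "inv f n" "inv f n + 1"])
      (auto simp: adjacent3_def nth1_def f_inv)
qed

lemma occurs_132_02_13_iff:
  "occurs n f [1, 3, 2] {0, 2} {1, 3} \<longleftrightarrow>
    (\<exists>a\<in>{1..n - 2}. \<exists>i\<in>{2..n - 1}. takes_values f [(1, a), (i, n), (i + 1, a + 1)])"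
proof
  show "(\<exists>a\<in>{1..n - 2}. \<exists>i\<in>{2..n - 1}. takes_values f [(1, a), (i, n), (i + 1, a + 1)])"
    if "occurs n f [1, 3, 2] {0, 2} {1, 3}"
    using that unfolding occurs_def increasing3_def adjacent3_def
    by (auto simp: nth1_def inv_simps numeral_2_eq_2)
next
  assume "(\<exists>a\<in>{1..n - 2}. \<exists>i\<in>{2..n - 1}. takes_values f [(1, a), (i, n), (i + 1, a + 1)])"
  then obtain a i where bounds: "a \<in> {1..n - 2}" "i \<in> {2..n - 1}"
    and vals: "f 1 = a \<and> f i = n \<and> f (i + 1) = a + 1"
    by auto
  show "occurs n f [1, 3, 2] {0, 2} {1, 3}"
    using vals n bounds by (intro occurs_132I[of 1 i "i + 1"])
      (auto simp: adjacent3_def nth1_def f_inv)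
qed

lemma occurs_132_02_23_iff:
  "occurs n f [1, 3, 2] {0, 2} {2, 3} \<longleftrightarrow>
    (\<exists>i\<in>{2..n - 1}. takes_values f [(i, n), (i + 1, n - 1)])"
proof
  show "(\<exists>i\<in>{2..n - 1}. takes_values f [(i, n), (i + 1, n - 1)])"
    if "occurs n f [1, 3, 2] {0, 2} {2, 3}"
    using that unfolding occurs_def increasing3_def adjacent3_def
    by (auto simp: nth1_def inv_simps numeral_2_eq_2)
next
  assume "(\<exists>i\<in>{2..n - 1}. takes_values f [(i, n), (i + 1, n - 1)])"
  then obtain i where bounds: "i \<in> {2..n - 1}" and vals: "f i = n \<and> f (i + 1) = n - 1"
    by auto
  have "f 1 \<in> {1..n}"
    unfolding range_simps using vals n bounds by auto
  moreover have "f 1 \<noteq> f i" "f 1 \<noteq> f (i + 1)"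
    using n bounds calculation by (auto simp: f_eq_iff)
  ultimately show "occurs n f [1, 3, 2] {0, 2} {2, 3}"
    using vals n bounds by (intro occurs_132I[of 1 i "i + 1"])
      (auto simp: adjacent3_def nth1_def f_inv)
qed

lemma occurs_132_12_03_iff:
  "occurs n f [1, 3, 2] {1, 2} {0, 3} \<longleftrightarrow>
    (\<exists>i\<in>{1..n - 2}. takes_values f [(i, 1), (i + 1, n)])"
proof
  show "(\<exists>i\<in>{1..n - 2}. takes_values f [(i, 1), (i + 1, n)])"
    if "occurs n f [1, 3, 2] {1, 2} {0, 3}"
    using that unfolding occurs_def increasing3_def adjacent3_def
    by (auto simp: nth1_def inv_simps numeral_2_eq_2)
next
  assume "(\<exists>i\<in>{1..n - 2}. takes_values f [(i, 1), (i + 1, n)])"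
  then obtain i where bounds: "i \<in> {1..n - 2}" and vals: "f i = 1 \<and> f (i + 1) = n"
    by auto
  have "f (i + 2) \<in> {1..n}"
    unfolding range_simps using vals n bounds by auto
  moreover have "f (i + 2) \<noteq> f i" "f (i + 2) \<noteq> f (i + 1)"
    using n bounds calculation by (auto simp: f_eq_iff)
  ultimately show "occurs n f [1, 3, 2] {1, 2} {0, 3}"
    using vals n bounds by (intro occurs_132I[of i "i + 1" "i + 2"])
      (auto simp: adjacent3_def nth1_def f_inv)
qed

lemma occurs_132_12_13_iff:
  "occurs n f [1, 3, 2] {1, 2} {1, 3} \<longleftrightarrow>
    (\<exists>a\<in>{1..n - 2}. \<exists>i\<in>{1..n - 2}. takes_values f [(i, a), (i + 1, n), (i + 2, a + 1)])"
proof
  assume "occurs n f [1, 3, 2] {1, 2} {1, 3}"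
  then obtain P Q where "increasing3 n P" "increasing3 n Q"
    and "\<forall>a\<in>{1, 2, 3}. f (P a) = Q (nth1 [1, 3, 2] a)"
    and "adjacent3 n {1, 2} P" "adjacent3 n {1, 3} Q"
    unfolding occurs_def by blast
  then show "(\<exists>a\<in>{1..n - 2}. \<exists>i\<in>{1..n - 2}. takes_values f [(i, a), (i + 1, n), (i + 2, a + 1)])"
    by - (rule bexI[of _ "Q 1"], rule bexI[of _ "P 1"],
      auto simp: increasing3_def adjacent3_def nth1_def)
next
  assume "(\<exists>a\<in>{1..n - 2}. \<exists>i\<in>{1..n - 2}. takes_values f [(i, a), (i + 1, n), (i + 2, a + 1)])"
  then obtain a i where bounds: "a \<in> {1..n - 2}" "i \<in> {1..n - 2}"
    and vals: "f i = a \<and> f (i + 1) = n \<and> f (i + 2) = a + 1"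
    by auto
  show "occurs n f [1, 3, 2] {1, 2} {1, 3}"
    using vals n bounds by (intro occurs_132I[of i "i + 1" "i + 2"])
      (auto simp: adjacent3_def nth1_def f_inv)
qed

lemma occurs_132_12_23_iff:
  "occurs n f [1, 3, 2] {1, 2} {2, 3} \<longleftrightarrow>
    (\<exists>i\<in>{2..n - 1}. takes_values f [(i, n), (i + 1, n - 1)])"
proof
  show "(\<exists>i\<in>{2..n - 1}. takes_values f [(i, n), (i + 1, n - 1)])"
    if "occurs n f [1, 3, 2] {1, 2} {2, 3}"
    using that unfolding occurs_def increasing3_def adjacent3_def
    by (auto simp: nth1_def inv_simps numeral_2_eq_2)
next
  assume "(\<exists>i\<in>{2..n - 1}. takes_values f [(i, n), (i + 1, n - 1)])"
  then obtain i where bounds: "i \<in> {2..n - 1}" and vals: "f i = n \<and> f (i + 1) = n - 1"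
    by auto
  have "f (i - 1) \<in> {1..n}"
    unfolding range_simps using vals n bounds by auto
  moreover have "f (i - 1) \<noteq> f i" "f (i - 1) \<noteq> f (i + 1)"
    using n bounds calculation by (auto simp: f_eq_iff)
  ultimately show "occurs n f [1, 3, 2] {1, 2} {2, 3}"
    using vals n bounds by (intro occurs_132I[of "i - 1" i "i + 1"])
      (auto simp: adjacent3_def nth1_def f_inv)
qed

lemma occurs_132_3_23_iff:
  "occurs n f [1, 3, 2] {3} {2, 3} \<longleftrightarrow> f n = n - 1 \<and> f 1 \<noteq> n"
proof
  show "f n = n - 1 \<and> f 1 \<noteq> n" if "occurs n f [1, 3, 2] {3} {2, 3}"
    using that unfolding occurs_def increasing3_def adjacent3_def
    by (auto simp: nth1_def inv_simps numeral_2_eq_2)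
next
  assume vals: "f n = n - 1 \<and> f 1 \<noteq> n"
  have "inv f n \<in> {1..n}" "f 1 \<in> {1..n}"
    unfolding range_simps using vals n by auto
  moreover have "inv f n \<noteq> 1" "inv f n \<noteq> n"
    using vals n calculation by (auto simp: value_simps)
  moreover have "f 1 \<noteq> f n"
    using n calculation by (auto simp: f_eq_iff)
  ultimately show "occurs n f [1, 3, 2] {3} {2, 3}"
    using vals n by (intro occurs_132I[of 1 "inv f n" n])
      (auto simp: adjacent3_def nth1_def f_inv)
qed

lemma occurs_132_03_03_iff:
  "occurs n f [1, 3, 2] {0, 3} {0, 3} \<longleftrightarrow> f 1 = 1 \<and> f n \<noteq> n"
proof
  show "f 1 = 1 \<and> f n \<noteq> n" if "occurs n f [1, 3, 2] {0, 3} {0, 3}"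
    using that unfolding occurs_def increasing3_def adjacent3_def
    by (auto simp: nth1_def inv_simps numeral_2_eq_2)
next
  assume vals: "f 1 = 1 \<and> f n \<noteq> n"
  have "inv f n \<in> {1..n}" "f n \<in> {1..n}"
    unfolding range_simps using vals n by auto
  moreover have "inv f n \<noteq> 1" "inv f n \<noteq> n"
    using vals n calculation by (auto simp: value_simps)
  moreover have "f n \<noteq> f 1"
    using n calculation by (auto simp: f_eq_iff)
  ultimately show "occurs n f [1, 3, 2] {0, 3} {0, 3}"
    using vals n by (intro occurs_132I[of 1 "inv f n" n])
      (auto simp: adjacent3_def nth1_def f_inv)
qed

lemma occurs_132_03_13_iff:
  "occurs n f [1, 3, 2] {0, 3} {1, 3} \<longleftrightarrow>
    (\<exists>a\<in>{1..n - 2}. takes_values f [(1, a), (n, a + 1)])"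
proof
  show "(\<exists>a\<in>{1..n - 2}. takes_values f [(1, a), (n, a + 1)])"
    if "occurs n f [1, 3, 2] {0, 3} {1, 3}"
    using that unfolding occurs_def increasing3_def adjacent3_def
    by (auto simp: nth1_def inv_simps numeral_2_eq_2)
next
  assume "(\<exists>a\<in>{1..n - 2}. takes_values f [(1, a), (n, a + 1)])"
  then obtain a where bounds: "a \<in> {1..n - 2}" and vals: "f 1 = a \<and> f n = a + 1"
    by auto
  have "inv f n \<in> {1..n}"
    unfolding range_simps using vals n bounds by auto
  moreover have "inv f n \<noteq> 1" "inv f n \<noteq> n"
    using vals n bounds calculation by (auto simp: value_simps)
  ultimately show "occurs n f [1, 3, 2] {0, 3} {1, 3}"
    using vals n bounds by (intro occurs_132I[of 1 "inv f n" n])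
      (auto simp: adjacent3_def nth1_def f_inv)
qed

lemma occurs_132_03_23_iff:
  "occurs n f [1, 3, 2] {0, 3} {2, 3} \<longleftrightarrow> f n = n - 1 \<and> f 1 \<noteq> n"
proof
  show "f n = n - 1 \<and> f 1 \<noteq> n" if "occurs n f [1, 3, 2] {0, 3} {2, 3}"
    using that unfolding occurs_def increasing3_def adjacent3_def
    by (auto simp: nth1_def inv_simps numeral_2_eq_2)
next
  assume vals: "f n = n - 1 \<and> f 1 \<noteq> n"
  have "inv f n \<in> {1..n}" "f 1 \<in> {1..n}"
    unfolding range_simps using vals n by auto
  moreover have "inv f n \<noteq> 1" "inv f n \<noteq> n"
    using vals n calculation by (auto simp: value_simps)
  moreover have "f 1 \<noteq> f n"
    using n calculation by (auto simp: f_eq_iff)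
  ultimately show "occurs n f [1, 3, 2] {0, 3} {2, 3}"
    using vals n by (intro occurs_132I[of 1 "inv f n" n])
      (auto simp: adjacent3_def nth1_def f_inv)
qed

lemma occurs_132_13_13_iff:
  "occurs n f [1, 3, 2] {1, 3} {1, 3} \<longleftrightarrow>
    (\<exists>a\<in>{1..n - 2}. \<exists>i\<in>{1..n - 2}. takes_values f [(i, a), (i + 1, n), (n, a + 1)])"
proof
  assume "occurs n f [1, 3, 2] {1, 3} {1, 3}"
  then obtain P Q where "increasing3 n P" "increasing3 n Q"
    and "\<forall>a\<in>{1, 2, 3}. f (P a) = Q (nth1 [1, 3, 2] a)"
    and "adjacent3 n {1, 3} P" "adjacent3 n {1, 3} Q"
    unfolding occurs_def by blast
  then show "(\<exists>a\<in>{1..n - 2}. \<exists>i\<in>{1..n - 2}. takes_values f [(i, a), (i + 1, n), (n, a + 1)])"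
    by - (rule bexI[of _ "Q 1"], rule bexI[of _ "P 1"],
      auto simp: increasing3_def adjacent3_def nth1_def)
next
  assume "(\<exists>a\<in>{1..n - 2}. \<exists>i\<in>{1..n - 2}. takes_values f [(i, a), (i + 1, n), (n, a + 1)])"
  then obtain a i where bounds: "a \<in> {1..n - 2}" "i \<in> {1..n - 2}"
    and vals: "f i = a \<and> f (i + 1) = n \<and> f n = a + 1"
    by auto
  show "occurs n f [1, 3, 2] {1, 3} {1, 3}"
    using vals n bounds by (intro occurs_132I[of i "i + 1" n])
      (auto simp: adjacent3_def nth1_def f_inv)
qed

lemma occurs_132_13_23_iff:
  "occurs n f [1, 3, 2] {1, 3} {2, 3} \<longleftrightarrow> f n = n - 1 \<and> f 1 \<noteq> n"
proof
  show "f n = n - 1 \<and> f 1 \<noteq> n" if "occurs n f [1, 3, 2] {1, 3} {2, 3}"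
    using that unfolding occurs_def increasing3_def adjacent3_def
    by (auto simp: nth1_def inv_simps numeral_2_eq_2)
next
  assume vals: "f n = n - 1 \<and> f 1 \<noteq> n"
  have "inv f n \<in> {1..n}"
    unfolding range_simps using vals n by auto
  moreover have "inv f n \<noteq> 1" "inv f n \<noteq> n"
    using vals n calculation by (auto simp: value_simps)
  moreover have "f (inv f n - 1) \<in> {1..n}"
    unfolding range_simps using vals n calculation by auto
  moreover have "f (inv f n - 1) \<noteq> f (inv f n)" "f (inv f n - 1) \<noteq> f n"
    using n calculation by (auto simp: f_eq_iff)
  ultimately show "occurs n f [1, 3, 2] {1, 3} {2, 3}"
    using vals n by (intro occurs_132I[of "inv f n - 1" "inv f n" n])
      (auto simp: adjacent3_def nth1_def f_inv)
qed

end

lemma card_occurs_thm16_patterns: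
  assumes n: "2 \<le> n"
  shows "\<forall>(\<sigma>, X, Y)\<in>set thm16_patterns.
    card {f. f permutes {1..n} \<and> occurs n f \<sigma> X Y} = fact (n - 2) * (n - 2)"
  using n unfolding thm16_patterns_def list.set ball_simps prod.case
  apply (intro conjI TrueI)
  subgoal by (rule card_occurs_value_not_value[OF occurs_123_0_01_iff[OF _ n]]) auto
  subgoal by (rule card_occurs_value_not_value[OF occurs_123_0_03_iff[OF _ n]]) auto
  subgoal by (rule card_occurs_pairs[OF occurs_123_1_01_iff[OF _ n]]) (auto simp: partial_perm_def)
  subgoal by (rule card_occurs_value_not_value[OF occurs_123_01_02_iff[OF _ n]]) auto
  subgoal by (rule card_occurs_pairs[OF occurs_123_01_12_iff[OF _ n]]) (auto simp: partial_perm_def)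
  subgoal by (rule card_occurs_value_not_value[OF occurs_123_01_03_iff[OF _ n]]) auto
  subgoal by (rule card_occurs_pairs[OF occurs_123_01_13_iff[OF _ n]]) (auto simp: partial_perm_def)
  subgoal by (rule card_occurs_value_not_value[OF occurs_123_01_23_iff[OF _ n]]) auto
  subgoal by (rule card_occurs_triples[OF occurs_123_02_12_iff[OF _ n]]) (auto simp: partial_perm_def)
  subgoal by (rule card_occurs_value_not_value[OF occurs_123_02_03_iff[OF _ n]]) auto
  subgoal by (rule card_occurs_triples[OF occurs_123_02_13_iff[OF _ n]]) (auto simp: partial_perm_def)
  subgoal by (rule card_occurs_pairs[OF occurs_123_12_03_iff[OF _ n]]) (auto simp: partial_perm_def)
  subgoal by (rule card_occurs_value_not_value[OF occurs_132_0_01_iff[OF _ n]]) auto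
  subgoal by (rule card_occurs_value_not_value[OF occurs_132_0_03_iff[OF _ n]]) auto
  subgoal by (rule card_occurs_pairs[OF occurs_132_1_03_iff[OF _ n]]) (auto simp: partial_perm_def)
  subgoal by (rule card_occurs_value_not_value[OF occurs_132_01_01_iff[OF _ n]]) auto
  subgoal by (rule card_occurs_value_not_value[OF occurs_132_01_02_iff[OF _ n]]) auto
  subgoal by (rule card_occurs_pairs[OF occurs_132_01_12_iff[OF _ n]]) (auto simp: partial_perm_def)
  subgoal by (rule card_occurs_value_not_value[OF occurs_132_01_3_iff[OF _ n]]) auto
  subgoal by (rule card_occurs_value_not_value[OF occurs_132_01_13_iff[OF _ n]]) auto
  subgoal by (rule card_occurs_value_not_value[OF occurs_132_01_23_iff[OF _ n]]) auto
  subgoal by (rule card_occurs_pairs[OF occurs_132_2_23_iff[OF _ n]]) (auto simp: partial_perm_def)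
  subgoal by (rule card_occurs_triples[OF occurs_132_02_12_iff[OF _ n]]) (auto simp: partial_perm_def)
  subgoal by (rule card_occurs_value_not_value[OF occurs_132_02_03_iff[OF _ n]]) auto
  subgoal by (rule card_occurs_triples[OF occurs_132_02_13_iff[OF _ n]]) (auto simp: partial_perm_def)
  subgoal by (rule card_occurs_pairs[OF occurs_132_02_23_iff[OF _ n]]) (auto simp: partial_perm_def)
  subgoal by (rule card_occurs_pairs[OF occurs_132_12_03_iff[OF _ n]]) (auto simp: partial_perm_def)
  subgoal by (rule card_occurs_triples[OF occurs_132_12_13_iff[OF _ n]]) (auto simp: partial_perm_def)
  subgoal by (rule card_occurs_pairs[OF occurs_132_12_23_iff[OF _ n]]) (auto simp: partial_perm_def)
  subgoal by (rule card_occurs_value_not_value[OF occurs_132_3_23_iff[OF _ n]]) auto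
  subgoal by (rule card_occurs_value_not_value[OF occurs_132_03_03_iff[OF _ n]]) auto
  subgoal by (rule card_occurs_pairs[OF occurs_132_03_13_iff[OF _ n]]) (auto simp: partial_perm_def)
  subgoal by (rule card_occurs_value_not_value[OF occurs_132_03_23_iff[OF _ n]]) auto
  subgoal by (rule card_occurs_triples[OF occurs_132_13_13_iff[OF _ n]]) (auto simp: partial_perm_def)
  subgoal by (rule card_occurs_value_not_value[OF occurs_132_13_23_iff[OF _ n]]) auto
  done

lemma a_n_thm16_patterns:
  assumes "p \<in> set thm16_patterns" "2 \<le> n"
  shows "is_pattern3 p \<and> a_n n p = fact n - fact (n - 2) * (n - 2)"
proof -
  obtain \<sigma> X Y where p: "p = (\<sigma>, X, Y)"
    by (cases p)
  have "\<sigma> \<in> permutations_of_set {1, 2, 3} \<and> X \<subseteq> {0..3} \<and> Y \<subseteq> {0..3}"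
    using assms(1) unfolding p thm16_patterns_def by (auto simp: permutations_of_set_def)
  moreover have "card {f. f permutes {1..n} \<and> occurs n f \<sigma> X Y} = fact (n - 2) * (n - 2)"
    using card_occurs_thm16_patterns[OF assms(2)] assms(1) unfolding p by auto
  ultimately show ?thesis
    unfolding p by (simp add: is_pattern3_def a_n_eq_fact_minus_card_occurs)
qed

theorem mainTheorem16:
  fixes p :: bvpattern and n :: nat
  assumes "p \<in> (\<Union>q\<in>set thm16_patterns. sym_class q)"
    and "n \<ge> 2"
  shows "a_n n p = fact n - fact (n - 2) * (n - 2)"
proof -
  obtain q where q: "q \<in> set thm16_patterns" "p \<in> sym_class q"
    using assms(1) by blast
  then show ?thesis
    using a_n_thm16_patterns[OF q(1) assms(2)] a_n_sym_class[OF q(2)] by simp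
qed

end
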